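(* For every parity game $\mathcal{G}$, the algorithm $\mathtt{solve}(\mathcal{G})$ (defined in the context) solves $\mathcal{G}$: it terminates and returns $W_0,W_1,\sigma_0,\sigma_1$ such that $W_0\cup W_1=V$, $W_0\cap W_1=\emptyset$, and for each player $\alpha\in\{0,1\}$, $\sigma_\alpha$ is a strategy of player $\alpha$ such that every play starting in $W_\alpha$ and consistent with $\sigma_\alpha$ is won by $\alpha$ (so $W_\alpha$ is exactly the set of vertices won by $\alpha$).
   Context: Parity games: $\mathcal{G}=(V_0,V_1,E,\mathrm{pr})$, $V=V_0\cup V_1$ finite, partitioned into vertices of Even ($0$) and Odd ($1$); $E\subseteq V\times V$ with every vertex having a successor; $\mathrm{pr}:V\to\{0,\dots,d\}$. $E(u)=\{v:(u,v)\in E\}$, $\mathrm{pr}(U)=\max_{u\in U}\mathrm{pr}(u)$, $\mathrm{pr}^{-1}(p)$ the set of vertices of priority $p$, $\overline{\alpha}=1-\alpha$. A play (infinite path) is won by Even iff the highest priority occurring infinitely often is even, otherwise by Odd; a cycle is won by $\alpha$ if its highest priority has parity $\alpha$. A strategy of $\alpha$ is a partial function $\sigma$ on $V_\alpha$ with $\sigma(v)\in E(v)$; a play is consistent with $\sigma$ if every vertex $v\in\mathrm{dom}(\sigma)$ on it is followed by $\sigma(v)$. A vertex is won by $\alpha$ if $\alpha$ has a strategy all of whose consistent plays from it are won by $\alpha$. For $U\subseteq V$, $\mathcal{G}\cap U$ is the subgame with vertices $V\cap U$ and edges $E\cap(U\times U)$, and $\mathcal{G}\setminus U=\mathcal{G}\cap(V\setminus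 U)$. A $p$-tangle is a nonempty $U\subseteq V$ with $p=\mathrm{pr}(U)$ such that for $\alpha\equiv p\pmod 2$ there is a strategy $\sigma:U\cap V_\alpha\to U$ (witness strategy $\sigma_T(U)$) with $(U,E\cap(\sigma\cup((U\cap V_{\overline{\alpha}})\times U)))$ strongly connected and all its cycles won by $\alpha$ ("won by $\alpha$"). For a tangle $t$ won by $\alpha$ in a game with edge set $E$, $E_T(t)=\{v\notin t:\exists u\in t\cap V_{\overline{\alpha}},(u,v)\in E\}$. $T_\alpha$ denotes the tangles of $T$ won by $\alpha$; for a subgame $\mathcal{G}'$, $T\cap\mathcal{G}'$ denotes the tangles of $T$ contained in its vertex set. Standard attractor: $\mathit{Attr}^{\mathcal{G}}_\alpha(A)$ is the least $Z\supseteq A$ containing every $v\in V_\alpha$ with $E(v)\cap Z\neq\emptyset$ and every $v\in V_{\overline{\alpha}}$ with $E(v)\subseteq Z$, computed iteratively with a strategy $\sigma$ mapping each $\alpha$-vertex added to $Z$ to a successor already in $Z$ (and each $\alpha$-vertex of $A$ to a successor in $Z$ once one exists). Tangle attractor $\mathit{TAttr}^{\mathcal{G},T}_\alpha(A)$: the least $Z\supseteq A$ closed under the two rules above and additionally containing every vertex of every $t\in T_\alpha$ with $\emptyset\neq E_T(t)\subseteq Z$ ($E_T$ computed in $\mathcal{G}$); its strategy is built as for $\mathit{Attr}$, and when the vertices of a tangle $t$ are added, $\sigma(u):=\sigma_T(t)(u)$ for every $\alpha$-vertex $u\in t$ not yet in $\mathrm{dom}(\sigma)$. extract-tangles$(Z,\sigma)$,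 for a subgame $\mathcal{G}'=(V',E')$ with top priority $p$, $\alpha\equiv p$, region $Z\subseteq V'$ and strategy $\sigma$: let $Y_Z$ be the greatest $X\subseteq Z$ such that every $v\in X\cap V_{\overline{\alpha}}$ has $E'(v)\subseteq X$ and every $v\in X\cap V_\alpha$ has $\sigma(v)\in X$; let $H$ be the graph on $Y_Z$ with edges $(v,\sigma(v))$ for $v\in Y_Z\cap V_\alpha$ and $(v,w)\in E'$ for $v\in Y_Z\cap V_{\overline{\alpha}}$; return all bottom strongly connected components of $H$ that contain at least one edge of $H$, each with witness strategy $\sigma$ restricted to it. $\mathtt{search}(\mathcal{G},T)$: repeat forever: set $r:=\emptyset$ (a partial function $V\to\mathbb{N}$) and $Y:=\emptyset$; while $V\setminus\mathrm{dom}(r)\neq\emptyset$: let $\mathcal{G}':=\mathcal{G}\setminus\mathrm{dom}(r)$ with vertex set $V'$, $T':=T\cap\mathcal{G}'$, $p:=\mathrm{pr}(\mathcal{G}')$, $\alpha:=p\bmod 2$; compute $(Z,\sigma):=\mathit{TAttr}^{\mathcal{G}',T'}_\alpha(\mathrm{pr}^{-1}(p)\cap V')$; let $A:=$ extract-tangles$(Z,\sigma)$; if some $t\in A$ has $E_T(t)=\emptyset$ with $E_T$ computed in $\mathcal{G}$, return $(T\cup Y,t)$; otherwise set $r(v):=p$ for all $v\in Z$ and $Y:=Y\cup A$. After the while-loop, set $T:=T\cup Y$. $\mathtt{solve}(\mathcal{G})$: set $W_0=W_1=\emptyset$, $\sigma_0=\sigma_1=\emptyset$, $T=\emptyset$;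 while $\mathcal{G}$ has a vertex: $(T,d):=\mathtt{search}(\mathcal{G},T)$; $\alpha:=\mathrm{pr}(d)\bmod 2$; $(D,\sigma):=\mathit{Attr}^{\mathcal{G}}_\alpha(d)$; $W_\alpha:=W_\alpha\cup D$; $\sigma_\alpha:=\sigma_\alpha\cup\sigma_T(d)\cup\sigma$; $\mathcal{G}:=\mathcal{G}\setminus D$; $T:=$ the tangles of $T$ contained in the remaining vertex set. Finally return $W_0,W_1,\sigma_0,\sigma_1$. *)

theory Defs
  imports Main
begin

text \<open>Players are the natural numbers 0 (Even) and 1 (Odd); the opponent of alpha is 1 - alpha.\<close>

record 'v pgame =
  V0 :: "'v set"
  V1 :: "'v set"
  E  :: "('v \<times> 'v) set"
  pr :: "'v \<Rightarrow> nat"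

definition V :: "('v, 'a) pgame_scheme \<Rightarrow> 'v set" where
  "V G = V0 G \<union> V1 G"

definition pl :: "('v, 'a) pgame_scheme \<Rightarrow> nat \<Rightarrow> 'v set" where
  "pl G \<alpha> = (if \<alpha> = 0 then V0 G else V1 G)"

definition parity_game :: "('v, 'a) pgame_scheme \<Rightarrow> bool" where
  "parity_game G \<longleftrightarrow> finite (V G) \<and> V0 G \<inter> V1 G = {} \<and> E G \<subseteq> V G \<times> V G
     \<and> (\<forall>v\<in>V G. \<exists>w. (v, w) \<in> E G)"

type_synonym 'v strat = "'v \<Rightarrow> 'v option"
type_synonym 'v tangle = "'v set \<times> 'v strat"

definition strategy :: "('v, 'a) pgame_scheme \<Rightarrow> nat \<Rightarrow> 'v strat \<Rightarrow> bool" where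
  "strategy G \<alpha> \<sigma> \<longleftrightarrow> dom \<sigma> \<subseteq> pl G \<alpha> \<and> (\<forall>v w. \<sigma> v = Some w \<longrightarrow> (v, w) \<in> E G)"

definition play :: "('v, 'a) pgame_scheme \<Rightarrow> (nat \<Rightarrow> 'v) \<Rightarrow> bool" where
  "play G \<pi> \<longleftrightarrow> (\<forall>i. (\<pi> i, \<pi> (Suc i)) \<in> E G)"

definition consistent :: "'v strat \<Rightarrow> (nat \<Rightarrow> 'v) \<Rightarrow> bool" where
  "consistent \<sigma> \<pi> \<longleftrightarrow> (\<forall>i. \<pi> i \<in> dom \<sigma> \<longrightarrow> \<sigma> (\<pi> i) = Some (\<pi> (Suc i)))"

definition play_winner :: "('v, 'a) pgame_scheme \<Rightarrow> (nat \<Rightarrow> 'v) \<Rightarrow> nat" where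
  "play_winner G \<pi> = Max {p. infinite {i. pr G (\<pi> i) = p}} mod 2"

definition won_by :: "('v, 'a) pgame_scheme \<Rightarrow> nat \<Rightarrow> 'v \<Rightarrow> bool" where
  "won_by G \<alpha> v \<longleftrightarrow> v \<in> V G \<and> (\<exists>\<sigma>. strategy G \<alpha> \<sigma> \<and>
     (\<forall>\<pi>. play G \<pi> \<and> \<pi> 0 = v \<and> consistent \<sigma> \<pi> \<longrightarrow> play_winner G \<pi> = \<alpha>))"

definition solves :: "('v, 'a) pgame_scheme \<Rightarrow> (nat \<Rightarrow> 'v set) \<Rightarrow> (nat \<Rightarrow> 'v strat) \<Rightarrow> bool" where
  "solves G W S \<longleftrightarrow> W 0 \<union> W 1 = V G \<and> W 0 \<inter> W 1 = {} \<and>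
     (\<forall>\<alpha>\<in>{0, 1}. strategy G \<alpha> (S \<alpha>) \<and>
        (\<forall>\<pi>. play G \<pi> \<and> \<pi> 0 \<in> W \<alpha> \<and> consistent (S \<alpha>) \<pi> \<longrightarrow> play_winner G \<pi> = \<alpha>) \<and>
        W \<alpha> = {v. won_by G \<alpha> v})"

definition edges_in :: "('v, 'a) pgame_scheme \<Rightarrow> 'v set \<Rightarrow> ('v \<times> 'v) set" where
  "edges_in G U = E G \<inter> (U \<times> U)"

definition succs :: "('v, 'a) pgame_scheme \<Rightarrow> 'v set \<Rightarrow> 'v \<Rightarrow> 'v set" where
  "succs G U v = {w. (v, w) \<in> edges_in G U}"

definition prio :: "('v, 'a) pgame_scheme \<Rightarrow> 'v set \<Rightarrow> nat" where
  "prio G U = Max (pr G ` U)"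

text \<open>The player winning a (p-)tangle: parity of its top priority.\<close>
definition tw :: "('v, 'a) pgame_scheme \<Rightarrow> 'v tangle \<Rightarrow> nat" where
  "tw G t = prio G (fst t) mod 2"

definition escapes :: "('v, 'a) pgame_scheme \<Rightarrow> 'v set \<Rightarrow> 'v tangle \<Rightarrow> 'v set" where
  "escapes G U t = {v. v \<notin> fst t \<and> (\<exists>u \<in> fst t \<inter> pl G (1 - tw G t). (u, v) \<in> edges_in G U)}"

text \<open>One step of the iterative computation of the tangle attractor
  TAttr^{G cap U, T}_alpha(A), together with its strategy. The standard attractor is the
  case T = {}. The result is reached when no step applies.\<close>
inductive attr_step :: "('v, 'a) pgame_scheme \<Rightarrow> 'v set \<Rightarrow> 'v tangle set \<Rightarrow> nat \<Rightarrow> 'v set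
    \<Rightarrow> 'v set \<times> 'v strat \<Rightarrow> 'v set \<times> 'v strat \<Rightarrow> bool"
  for G U T \<alpha> A where
  own: "\<lbrakk>v \<in> U; v \<notin> Z; v \<in> pl G \<alpha>; w \<in> Z; (v, w) \<in> edges_in G U\<rbrakk>
        \<Longrightarrow> attr_step G U T \<alpha> A (Z, \<sigma>) (insert v Z, \<sigma>(v \<mapsto> w))"
| opp: "\<lbrakk>v \<in> U; v \<notin> Z; v \<in> pl G (1 - \<alpha>); succs G U v \<subseteq> Z\<rbrakk>
        \<Longrightarrow> attr_step G U T \<alpha> A (Z, \<sigma>) (insert v Z, \<sigma>)"
| target: "\<lbrakk>v \<in> A; v \<in> pl G \<alpha>; \<sigma> v = None; w \<in> Z; (v, w) \<in> edges_in G U\<rbrakk>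
        \<Longrightarrow> attr_step G U T \<alpha> A (Z, \<sigma>) (Z, \<sigma>(v \<mapsto> w))"
| tangle: "\<lbrakk>t \<in> T; fst t \<subseteq> U; tw G t = \<alpha>; escapes G U t \<noteq> {}; escapes G U t \<subseteq> Z;
           \<not> fst t \<subseteq> Z\<rbrakk>
        \<Longrightarrow> attr_step G U T \<alpha> A (Z, \<sigma>)
              (Z \<union> fst t, (snd t |` (fst t \<inter> pl G \<alpha>)) ++ \<sigma>)"

definition closed_for :: "('v, 'a) pgame_scheme \<Rightarrow> 'v set \<Rightarrow> nat \<Rightarrow> 'v strat \<Rightarrow> 'v set \<Rightarrow> bool" where
  "closed_for G U \<alpha> \<sigma> X \<longleftrightarrow>
     (\<forall>v \<in> X \<inter> pl G (1 - \<alpha>). succs G U v \<subseteq> X) \<and>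
     (\<forall>v \<in> X \<inter> pl G \<alpha>. \<exists>w. \<sigma> v = Some w \<and> w \<in> X)"

definition YZ :: "('v, 'a) pgame_scheme \<Rightarrow> 'v set \<Rightarrow> nat \<Rightarrow> 'v set \<Rightarrow> 'v strat \<Rightarrow> 'v set" where
  "YZ G U \<alpha> Z \<sigma> = \<Union>{X. X \<subseteq> Z \<and> closed_for G U \<alpha> \<sigma> X}"

definition Hgraph :: "('v, 'a) pgame_scheme \<Rightarrow> 'v set \<Rightarrow> nat \<Rightarrow> 'v set \<Rightarrow> 'v strat \<Rightarrow> ('v \<times> 'v) set" where
  "Hgraph G U \<alpha> Z \<sigma> =
     {(v, w). v \<in> YZ G U \<alpha> Z \<sigma> \<inter> pl G \<alpha> \<and> \<sigma> v = Some w} \<union>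
     {(v, w). v \<in> YZ G U \<alpha> Z \<sigma> \<inter> pl G (1 - \<alpha>) \<and> (v, w) \<in> edges_in G U}"

definition bottom_scc :: "'v set \<Rightarrow> ('v \<times> 'v) set \<Rightarrow> 'v set \<Rightarrow> bool" where
  "bottom_scc Y H C \<longleftrightarrow> C \<noteq> {} \<and> C \<subseteq> Y \<and> (\<forall>u\<in>C. \<forall>w\<in>C. (u, w) \<in> H\<^sup>*) \<and>
     (\<forall>u\<in>C. \<forall>w. (u, w) \<in> H \<longrightarrow> w \<in> C)"

definition extract_tangles :: "('v, 'a) pgame_scheme \<Rightarrow> 'v set \<Rightarrow> nat \<Rightarrow> 'v set \<Rightarrow> 'v strat
    \<Rightarrow> 'v tangle set" where
  "extract_tangles G U \<alpha> Z \<sigma> =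
     {(C, \<sigma> |` C) | C. bottom_scc (YZ G U \<alpha> Z \<sigma>) (Hgraph G U \<alpha> Z \<sigma>) C \<and>
        (\<exists>u\<in>C. \<exists>w\<in>C. (u, w) \<in> Hgraph G U \<alpha> Z \<sigma>)}"

text \<open>Solve-level variables: R (vertex set of the current game), W, S (W_alpha, sigma_alpha),
  T (tangles). Search-level: r (partial map), Y. Attractor-level: Z, sigma. In Attr, d is the
  dominion found by search.\<close>
datatype 'v state =
    Solve "'v set" "nat \<Rightarrow> 'v set" "nat \<Rightarrow> 'v strat" "'v tangle set"
  | Search "'v set" "nat \<Rightarrow> 'v set" "nat \<Rightarrow> 'v strat" "'v tangle set" "'v \<Rightarrow> nat option"
      "'v tangle set"
  | TAttr "'v set" "nat \<Rightarrow> 'v set" "nat \<Rightarrow> 'v strat" "'v tangle set" "'v \<Rightarrow> nat option"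
      "'v tangle set" "'v set" "'v strat"
  | Attr "'v set" "nat \<Rightarrow> 'v set" "nat \<Rightarrow> 'v strat" "'v tangle set" "'v tangle" "'v set"
      "'v strat"
  | Done "nat \<Rightarrow> 'v set" "nat \<Rightarrow> 'v strat"

definition init :: "('v, 'a) pgame_scheme \<Rightarrow> 'v state" where
  "init G = Solve (V G) (\<lambda>_. {}) (\<lambda>_. Map.empty) {}"

inductive alg_step :: "('v, 'a) pgame_scheme \<Rightarrow> 'v state \<Rightarrow> 'v state \<Rightarrow> bool" for G where
  solve_done: "R = {} \<Longrightarrow> alg_step G (Solve R W S T) (Done W S)"
| solve_search: "R \<noteq> {} \<Longrightarrow> alg_step G (Solve R W S T) (Search R W S T Map.empty {})"
| search_iter: "\<lbrakk>\<not> R \<subseteq> dom r; U' = R - dom r; p = prio G U'\<rbrakk>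
    \<Longrightarrow> alg_step G (Search R W S T r Y)
          (TAttr R W S T r Y ({v. pr G v = p} \<inter> U') Map.empty)"
| search_repeat: "R \<subseteq> dom r \<Longrightarrow> alg_step G (Search R W S T r Y) (Search R W S (T \<union> Y) Map.empty {})"
| tattr_step: "\<lbrakk>U' = R - dom r; p = prio G U';
      attr_step G U' T (p mod 2) ({v. pr G v = p} \<inter> U') (Z, \<sigma>) (Z', \<sigma>')\<rbrakk>
    \<Longrightarrow> alg_step G (TAttr R W S T r Y Z \<sigma>) (TAttr R W S T r Y Z' \<sigma>')"
| tattr_dominion: "\<lbrakk>U' = R - dom r; p = prio G U';
      \<not> (\<exists>s. attr_step G U' T (p mod 2) ({v. pr G v = p} \<inter> U') (Z, \<sigma>) s);
      t \<in> extract_tangles G U' (p mod 2) Z \<sigma>; escapes G R t = {}\<rbrakk>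
    \<Longrightarrow> alg_step G (TAttr R W S T r Y Z \<sigma>) (Attr R W S (T \<union> Y) t (fst t) Map.empty)"
| tattr_next: "\<lbrakk>U' = R - dom r; p = prio G U';
      \<not> (\<exists>s. attr_step G U' T (p mod 2) ({v. pr G v = p} \<inter> U') (Z, \<sigma>) s);
      \<forall>t \<in> extract_tangles G U' (p mod 2) Z \<sigma>. escapes G R t \<noteq> {}\<rbrakk>
    \<Longrightarrow> alg_step G (TAttr R W S T r Y Z \<sigma>)
          (Search R W S T (\<lambda>v. if v \<in> Z then Some p else r v)
             (Y \<union> extract_tangles G U' (p mod 2) Z \<sigma>))"
| attr_step: "attr_step G R {} (tw G d) (fst d) (Z, \<sigma>) (Z', \<sigma>')
    \<Longrightarrow> alg_step G (Attr R W S T d Z \<sigma>) (Attr R W S T d Z' \<sigma>')"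
| attr_done: "\<lbrakk>\<not> (\<exists>s. attr_step G R {} (tw G d) (fst d) (Z, \<sigma>) s); \<alpha> = tw G d\<rbrakk>
    \<Longrightarrow> alg_step G (Attr R W S T d Z \<sigma>)
          (Solve (R - Z) (W(\<alpha> := W \<alpha> \<union> Z)) (S(\<alpha> := S \<alpha> ++ \<sigma> ++ snd d))
             {t \<in> T. fst t \<subseteq> R - Z})"

end

theory Submission
  imports Defs
begin

text \<open>Every region built by the algorithm comes with a certificate: the graph in which the
  owner follows its strategy and the opponent may take any edge has only cycles won by the
  owner. A play confined to such a region visits a vertex of its recurring top priority twice
  with nothing higher in between, so this priority closes a cycle and the play is won.
  The tangle attractor keeps all cycles avoiding its target won, and cycles through the target
  are won since the target carries the top priority; extracted tangles, attracted dominions and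
  the growing solution inherit certificates by gluing along closed regions.
  Termination follows lexicographically: each round of search either returns a dominion or
  ends having found a tangle not known before, and there are finitely many tangles.\<close>

lemma parity_game_edge_in_V: "parity_game G \<Longrightarrow> (u, w) \<in> E G \<Longrightarrow> u \<in> V G \<and> w \<in> V G"
  by (auto simp: parity_game_def)

lemma pl_or_opponent: "\<alpha> < 2 \<Longrightarrow> u \<in> V G \<Longrightarrow> u \<in> pl G \<alpha> \<or> u \<in> pl G (1 - \<alpha>)"
  by (cases "\<alpha> = 0") (auto simp: pl_def V_def)

lemma pl_opponent_disjoint:
  "parity_game G \<Longrightarrow> \<alpha> < 2 \<Longrightarrow> u \<in> pl G \<alpha> \<Longrightarrow> u \<in> pl G (1 - \<alpha>) \<Longrightarrow> False"
  by (cases "\<alpha> = 0") (auto simp: pl_def parity_game_def)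

lemma tw_less_2: "tw G t < 2"
  by (simp add: tw_def)

section \<open>Graphs all of whose cycles are won by a player\<close>

definition edges_upto :: "('v, 'a) pgame_scheme \<Rightarrow> ('v \<times> 'v) set \<Rightarrow> 'v \<Rightarrow> ('v \<times> 'v) set" where
  "edges_upto G H v = {(a, b). (a, b) \<in> H \<and> pr G a \<le> pr G v \<and> pr G b \<le> pr G v}"

text \<open>A cycle of H whose top priority is that of v is exactly a cycle through v in the part of H
  below the priority of v.\<close>
definition cycles_won :: "('v, 'a) pgame_scheme \<Rightarrow> ('v \<times> 'v) set \<Rightarrow> nat \<Rightarrow> bool" where
  "cycles_won G H \<alpha> \<longleftrightarrow> (\<forall>v. (v, v) \<in> (edges_upto G H v)\<^sup>+ \<longrightarrow> pr G v mod 2 = \<alpha>)"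

lemma cycles_won_mono: "H \<subseteq> H' \<Longrightarrow> cycles_won G H' \<alpha> \<Longrightarrow> cycles_won G H \<alpha>"
proof -
  assume a: "H \<subseteq> H'" "cycles_won G H' \<alpha>"
  have "edges_upto G H v \<subseteq> edges_upto G H' v" for v using a(1) by (auto simp: edges_upto_def)
  then show ?thesis using a(2) unfolding cycles_won_def by (meson subsetD trancl_mono)
qed

lemma cycles_won_empty: "cycles_won G {} \<alpha>"
  by (simp add: cycles_won_def edges_upto_def)

lemma trancl_union_from_closed:
  assumes "P \<subseteq> X \<times> X" "Q \<subseteq> (- X) \<times> UNIV" "(x, y) \<in> (P \<union> Q)\<^sup>+" "x \<in> X"
  shows "(x, y) \<in> P\<^sup>+"
  using assms(3,4)
proof (induction rule: trancl_induct)
  case (base y) then show ?case using assms(2) by auto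
next
  case (step y z)
  have "(x, y) \<in> P\<^sup>+" using step by blast
  then have "y \<in> Range P" by (metis Range.intros trancl_range)
  then have "y \<in> X" using assms(1) by auto
  then have "(y, z) \<in> P" using step assms(2) by auto
  then show ?case using \<open>(x, y) \<in> P\<^sup>+\<close> by auto
qed

lemma trancl_union_into_outside:
  assumes "P \<subseteq> X \<times> X" "Q \<subseteq> (- X) \<times> UNIV" "(x, y) \<in> (P \<union> Q)\<^sup>+" "y \<notin> X"
  shows "(x, y) \<in> (Q \<inter> (- X) \<times> (- X))\<^sup>+"
  using assms(3,4)
proof (induction rule: trancl_induct)
  case (base y) then show ?case using assms(1,2) by auto
next
  case (step y z)
  then have "(y, z) \<in> Q" "y \<notin> X" using assms(1,2) by auto
  then have "(y, z) \<in> Q \<inter> (- X) \<times> (- X)" using step(4) by auto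
  then show ?case using step(3) \<open>y \<notin> X\<close> by (meson trancl_into_trancl)
qed

text \<open>A cycle either stays inside the closed region X, where H agrees with H0, or stays outside.\<close>
lemma cycles_won_glue:
  assumes "H0 \<subseteq> X \<times> X" "cycles_won G H0 \<alpha>" "H \<inter> (X \<times> UNIV) \<subseteq> H0"
    "cycles_won G (H \<inter> (- X) \<times> (- X)) \<alpha>"
  shows "cycles_won G H \<alpha>"
  unfolding cycles_won_def
proof (intro allI impI)
  fix v assume v: "(v, v) \<in> (edges_upto G H v)\<^sup>+"
  let ?P = "edges_upto G H v \<inter> (X \<times> UNIV)" and ?Q = "edges_upto G H v \<inter> ((- X) \<times> UNIV)"
  have P: "?P \<subseteq> edges_upto G H0 v" using assms(3) by (auto simp: edges_upto_def)
  have PX: "?P \<subseteq> X \<times> X" using P assms(1) by (auto simp: edges_upto_def)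
  have "edges_upto G H v = ?P \<union> ?Q" by auto
  then have v2: "(v, v) \<in> (?P \<union> ?Q)\<^sup>+" using v by simp
  show "pr G v mod 2 = \<alpha>"
  proof (cases "v \<in> X")
    case True
    have "(v, v) \<in> ?P\<^sup>+" by (rule trancl_union_from_closed[OF PX _ v2 True]) auto
    then have "(v, v) \<in> (edges_upto G H0 v)\<^sup>+" using P trancl_mono by blast
    then show ?thesis using assms(2) by (auto simp: cycles_won_def)
  next
    case False
    have "(v, v) \<in> (?Q \<inter> (- X) \<times> (- X))\<^sup>+" by (rule trancl_union_into_outside[OF PX _ v2 False]) auto
    moreover have "?Q \<inter> (- X) \<times> (- X) \<subseteq> edges_upto G (H \<inter> (- X) \<times> (- X)) v"
      by (auto simp: edges_upto_def)
    ultimately have "(v, v) \<in> (edges_upto G (H \<inter> (- X) \<times> (- X)) v)\<^sup>+" using trancl_mono by blast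
    then show ?thesis using assms(4) by (auto simp: cycles_won_def)
  qed
qed

lemma trancl_avoiding_or_edge_from:
  assumes "(x, y) \<in> K\<^sup>+"
  shows "(x, y) \<in> (K \<inter> (- A) \<times> UNIV)\<^sup>+ \<or> (\<exists>a\<in>A. \<exists>b. (a, b) \<in> K)"
  using assms
proof (induction rule: trancl_induct)
  case (base y) then show ?case by auto
next
  case (step y z)
  then show ?case
    by (cases "y \<in> A") (auto intro: trancl_into_trancl)
qed

text \<open>A cycle through a vertex of the top priority p is won by the parity of p.\<close>
lemma cycles_won_top_priority:
  assumes "cycles_won G (H \<inter> (- A) \<times> UNIV) \<alpha>" "\<forall>(a, b) \<in> H. pr G a \<le> p"
    "\<forall>a\<in>A. pr G a = p" "p mod 2 = \<alpha>"
  shows "cycles_won G H \<alpha>"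
  unfolding cycles_won_def
proof (intro allI impI)
  fix v assume v: "(v, v) \<in> (edges_upto G H v)\<^sup>+"
  from trancl_avoiding_or_edge_from[OF v, of A] show "pr G v mod 2 = \<alpha>"
  proof
    assume "(v, v) \<in> (edges_upto G H v \<inter> (- A) \<times> UNIV)\<^sup>+"
    moreover have "edges_upto G H v \<inter> (- A) \<times> UNIV \<subseteq> edges_upto G (H \<inter> (- A) \<times> UNIV) v"
      by (auto simp: edges_upto_def)
    ultimately have "(v, v) \<in> (edges_upto G (H \<inter> (- A) \<times> UNIV) v)\<^sup>+" using trancl_mono by blast
    then show ?thesis using assms(1) by (auto simp: cycles_won_def)
  next
    assume "\<exists>a\<in>A. \<exists>b. (a, b) \<in> edges_upto G H v"
    then obtain a b where ab: "a \<in> A" "(a, b) \<in> edges_upto G H v" by blast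
    obtain w where "(v, w) \<in> edges_upto G H v" using v by (meson tranclD)
    then have "pr G v \<le> p" using assms(2) by (auto simp: edges_upto_def)
    moreover have "pr G a \<le> pr G v" "pr G a = p" using ab assms(3) by (auto simp: edges_upto_def)
    ultimately show ?thesis using assms(4) by simp
  qed
qed

section \<open>Plays\<close>

lemma path_segment_trancl:
  assumes "\<forall>k. i \<le> k \<longrightarrow> k < j \<longrightarrow> (\<pi> k, \<pi> (Suc k)) \<in> K" "i < j"
  shows "(\<pi> i, \<pi> j) \<in> K\<^sup>+"
  using assms
proof (induction j)
  case 0 then show ?case by simp
next
  case (Suc j)
  then show ?case
    by (cases "i = j") (auto intro: trancl_into_trancl)
qed

lemma recurring_max_of_finite_range:
  fixes f :: "nat \<Rightarrow> nat"
  assumes fin: "finite (range f)"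
  defines "m \<equiv> Max {p. infinite {i. f i = p}}"
  shows "infinite {i. f i = m}" and "\<exists>N. \<forall>i\<ge>N. f i \<le> m"
proof -
  let ?P = "{p. infinite {i. f i = p}}"
  have PV: "?P \<subseteq> range f" by (auto dest: not_finite_existsD)
  have finP: "finite ?P" using PV fin finite_subset by blast
  have "?P \<noteq> {}"
  proof
    assume "?P = {}"
    then have "finite (\<Union>p \<in> range f. {i. f i = p})" using fin by (intro finite_UN_I) auto
    moreover have "(\<Union>p \<in> range f. {i. f i = p}) = UNIV" by auto
    ultimately show False by simp
  qed
  then have "m \<in> ?P" unfolding m_def using finP by (rule Max_in[rotated])
  then show "infinite {i. f i = m}" by simp
  have "p \<le> m" if "p \<in> ?P" for p using finP that by (simp add: m_def)
  then have "\<And>p. p > m \<Longrightarrow> finite {i. f i = p}" by force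
  then have "finite (\<Union>p \<in> range f \<inter> {m<..}. {i. f i = p})" using fin by auto
  moreover have "{i. f i > m} = (\<Union>p \<in> range f \<inter> {m<..}. {i. f i = p})" by auto
  ultimately obtain N where N: "\<forall>i\<in>{i. f i > m}. i < N" using finite_nat_set_iff_bounded by auto
  have "\<forall>i\<ge>N. f i \<le> m"
  proof (intro allI impI)
    fix i assume "N \<le> i"
    then show "f i \<le> m" using N not_le by blast
  qed
  then show "\<exists>N. \<forall>i\<ge>N. f i \<le> m" by blast
qed

lemma play_winner_recurring_vertex:
  assumes fin: "finite (V G)" and inV: "\<forall>i. \<pi> i \<in> V G"
  obtains i j where "i < j" "\<pi> j = \<pi> i" "play_winner G \<pi> = pr G (\<pi> i) mod 2"
    "\<forall>k\<ge>i. pr G (\<pi> k) \<le> pr G (\<pi> i)"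
proof -
  let ?f = "\<lambda>i. pr G (\<pi> i)"
  define m where "m = Max {p. infinite {i. ?f i = p}}"
  have "range ?f \<subseteq> pr G ` V G" using inV by auto
  then have finf: "finite (range ?f)" using fin finite_surj by blast
  obtain N where N: "\<forall>i\<ge>N. ?f i \<le> m"
    using recurring_max_of_finite_range(2)[OF finf] unfolding m_def by blast
  let ?A = "{i. ?f i = m \<and> N \<le> i}"
  have "{i. ?f i = m} \<subseteq> ?A \<union> {..<N}" by auto
  then have infA: "infinite ?A"
    using recurring_max_of_finite_range(1)[OF finf] finite_subset unfolding m_def by blast
  have "finite (\<pi> ` ?A)" using inV fin by (meson finite_subset image_subsetI)
  then obtain i where i: "i \<in> ?A" "infinite {a \<in> ?A. \<pi> a = \<pi> i}"
    using pigeonhole_infinite[OF infA] by blast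
  have "\<not> {a \<in> ?A. \<pi> a = \<pi> i} \<subseteq> {..i}" using i(2) finite_subset by blast
  then obtain j where "j \<in> {a \<in> ?A. \<pi> a = \<pi> i}" "\<not> j \<le> i" by blast
  then have "j > i" "\<pi> j = \<pi> i" by auto
  moreover have "play_winner G \<pi> = pr G (\<pi> i) mod 2" using i by (simp add: play_winner_def m_def)
  moreover have "\<forall>k\<ge>i. pr G (\<pi> k) \<le> pr G (\<pi> i)" using i N by auto
  ultimately show ?thesis using that by blast
qed

lemma play_winner_if_cycles_won:
  assumes fin: "finite (V G)" and inV: "\<forall>i. \<pi> i \<in> V G"
    and edges: "\<forall>i. (\<pi> i, \<pi> (Suc i)) \<in> H" and cw: "cycles_won G H \<alpha>"
  shows "play_winner G \<pi> = \<alpha>"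
proof -
  obtain i j where ij: "i < j" "\<pi> j = \<pi> i" "play_winner G \<pi> = pr G (\<pi> i) mod 2"
    and below: "\<forall>k\<ge>i. pr G (\<pi> k) \<le> pr G (\<pi> i)"
    using play_winner_recurring_vertex[OF fin inV] by blast
  have "(\<pi> i, \<pi> j) \<in> (edges_upto G H (\<pi> i))\<^sup>+"
    by (rule path_segment_trancl) (use ij below edges in \<open>auto simp: edges_upto_def\<close>)
  then show ?thesis using cw ij by (simp add: cycles_won_def)
qed

section \<open>Tangles and the invariant of the tangle attractor\<close>

definition tangle_graph :: "('v, 'a) pgame_scheme \<Rightarrow> 'v tangle \<Rightarrow> ('v \<times> 'v) set" where
  "tangle_graph G t = {(u, w). u \<in> fst t \<and> w \<in> fst t \<and> ((u \<in> pl G (tw G t) \<and> snd t u = Some w)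
     \<or> (u \<in> pl G (1 - tw G t) \<and> (u, w) \<in> E G))}"

text \<open>The strong connectivity required of a tangle is irrelevant for correctness and omitted.\<close>
definition is_tangle :: "('v, 'a) pgame_scheme \<Rightarrow> 'v tangle \<Rightarrow> bool" where
  "is_tangle G t \<longleftrightarrow> fst t \<noteq> {} \<and> fst t \<subseteq> V G \<and> dom (snd t) \<subseteq> fst t \<inter> pl G (tw G t) \<and>
     (\<forall>u w. snd t u = Some w \<longrightarrow> (u, w) \<in> E G \<and> w \<in> fst t) \<and>
     (\<forall>u \<in> fst t \<inter> pl G (tw G t). snd t u \<noteq> None) \<and> cycles_won G (tangle_graph G t) (tw G t)"

definition attr_graph :: "('v, 'a) pgame_scheme \<Rightarrow> 'v set \<Rightarrow> nat \<Rightarrow> 'v set \<Rightarrow> 'v set \<Rightarrow> 'v strat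
    \<Rightarrow> ('v \<times> 'v) set" where
  "attr_graph G U \<alpha> A Z \<sigma> = {(u, w). u \<in> Z \<and> u \<notin> A \<and> ((u \<in> pl G \<alpha> \<and> \<sigma> u = Some w)
     \<or> (u \<in> pl G (1 - \<alpha>) \<and> (u, w) \<in> edges_in G U))}"

definition attr_inv :: "('v, 'a) pgame_scheme \<Rightarrow> 'v set \<Rightarrow> nat \<Rightarrow> 'v set \<Rightarrow> 'v set \<Rightarrow> 'v strat
    \<Rightarrow> bool" where
  "attr_inv G U \<alpha> A Z \<sigma> \<longleftrightarrow> A \<subseteq> Z \<and> Z \<subseteq> U \<and> dom \<sigma> \<subseteq> Z \<inter> pl G \<alpha> \<and>
     (\<forall>u w. \<sigma> u = Some w \<longrightarrow> (u, w) \<in> edges_in G U \<and> w \<in> Z) \<and>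
     (\<forall>u \<in> (Z - A) \<inter> pl G \<alpha>. \<sigma> u \<noteq> None) \<and>
     (\<forall>u \<in> (Z - A) \<inter> pl G (1 - \<alpha>). succs G U u \<subseteq> Z) \<and>
     cycles_won G (attr_graph G U \<alpha> A Z \<sigma>) \<alpha>"

lemma attr_inv_init: "A \<subseteq> U \<Longrightarrow> attr_inv G U \<alpha> A A Map.empty"
proof -
  have "attr_graph G U \<alpha> A A Map.empty = {}" by (auto simp: attr_graph_def)
  then show "A \<subseteq> U \<Longrightarrow> attr_inv G U \<alpha> A A Map.empty" by (auto simp: attr_inv_def cycles_won_empty)
qed

lemma attr_graph_subset: "attr_inv G U \<alpha> A Z \<sigma> \<Longrightarrow> attr_graph G U \<alpha> A Z \<sigma> \<subseteq> Z \<times> Z"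
  by (auto simp: attr_inv_def attr_graph_def succs_def)

lemma cycles_won_attr_extend:
  assumes "attr_inv G U \<alpha> A Z \<sigma>"
    "attr_graph G U \<alpha> A Z' \<sigma>' \<inter> (Z \<times> UNIV) \<subseteq> attr_graph G U \<alpha> A Z \<sigma>"
    "cycles_won G (attr_graph G U \<alpha> A Z' \<sigma>' \<inter> (- Z) \<times> (- Z)) \<alpha>"
  shows "cycles_won G (attr_graph G U \<alpha> A Z' \<sigma>') \<alpha>"
  by (rule cycles_won_glue[OF attr_graph_subset[OF assms(1)] _ assms(2,3)])
    (use assms(1) in \<open>simp add: attr_inv_def\<close>)

lemma attr_step_grows:
  assumes "attr_step G U T \<alpha> A (Z, \<sigma>) (Z', \<sigma>')"
  shows "Z \<subseteq> Z' \<and> dom \<sigma> \<subseteq> dom \<sigma>' \<and> (Z \<noteq> Z' \<or> dom \<sigma> \<noteq> dom \<sigma>')"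
  using assms by (cases rule: attr_step.cases) auto

lemma map_add_restrict_Some_iff:
  "((m |` B) ++ \<sigma>) u = Some w \<longleftrightarrow> \<sigma> u = Some w \<or> (\<sigma> u = None \<and> u \<in> B \<and> m u = Some w)"
  by (auto simp: map_add_Some_iff restrict_map_def)

lemma attr_graph_add_tangle_outside:
  assumes inv: "attr_inv G U \<alpha> A Z \<sigma>" and t: "is_tangle G t" "tw G t = \<alpha>"
    and esc: "escapes G U t \<subseteq> Z"
  defines "\<sigma>' \<equiv> (snd t |` (fst t \<inter> pl G \<alpha>)) ++ \<sigma>"
  shows "attr_graph G U \<alpha> A (Z \<union> fst t) \<sigma>' \<inter> (- Z) \<times> (- Z) \<subseteq> tangle_graph G t"
proof clarify
  fix u w assume uw: "(u, w) \<in> attr_graph G U \<alpha> A (Z \<union> fst t) \<sigma>'" "u \<notin> Z" "w \<notin> Z"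
  then have u: "u \<in> fst t" "\<sigma> u = None" using inv by (auto simp: attr_graph_def attr_inv_def)
  have "snd t u = Some w \<Longrightarrow> w \<in> fst t" using t by (auto simp: is_tangle_def)
  moreover have "u \<in> pl G (1 - \<alpha>) \<Longrightarrow> (u, w) \<in> edges_in G U \<Longrightarrow> w \<in> fst t"
    using esc uw(3) u t(2) by (auto simp: escapes_def)
  ultimately show "(u, w) \<in> tangle_graph G t"
    using uw u t(2) unfolding attr_graph_def tangle_graph_def \<sigma>'_def map_add_restrict_Some_iff
    by (auto simp: edges_in_def)
qed

text \<open>The new cycles lie inside the tangle, where they are won by its witness strategy.\<close>
lemma attr_inv_add_tangle:
  assumes inv: "attr_inv G U \<alpha> A Z \<sigma>" and t: "is_tangle G t" "tw G t = \<alpha>" "fst t \<subseteq> U"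
    and esc: "escapes G U t \<subseteq> Z"
  defines "\<sigma>' \<equiv> (snd t |` (fst t \<inter> pl G \<alpha>)) ++ \<sigma>"
  shows "attr_inv G U \<alpha> A (Z \<union> fst t) \<sigma>'"
proof -
  have i: "dom \<sigma> \<subseteq> Z \<inter> pl G \<alpha>" "\<And>u. u \<in> Z - A \<Longrightarrow> u \<in> pl G \<alpha> \<Longrightarrow> \<sigma> u \<noteq> None"
    "\<And>u. u \<in> Z - A \<Longrightarrow> u \<in> pl G (1 - \<alpha>) \<Longrightarrow> succs G U u \<subseteq> Z"
    using inv unfolding attr_inv_def by auto
  have snd_t: "\<And>u w. snd t u = Some w \<Longrightarrow> (u, w) \<in> E G \<and> w \<in> fst t"
    "\<And>u. u \<in> fst t \<Longrightarrow> u \<in> pl G \<alpha> \<Longrightarrow> snd t u \<noteq> None" "dom (snd t) \<subseteq> fst t \<inter> pl G \<alpha>"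
    using t unfolding is_tangle_def by auto
  have own_on_Z: "u \<in> Z \<Longrightarrow> u \<notin> A \<Longrightarrow> u \<in> pl G \<alpha> \<Longrightarrow> \<sigma>' u = \<sigma> u" for u
    using i(2)[of u] by (auto simp: \<sigma>'_def map_add_def split: option.splits)
  have edges: "\<forall>u w. \<sigma>' u = Some w \<longrightarrow> (u, w) \<in> edges_in G U \<and> w \<in> Z \<union> fst t"
    using inv snd_t(1) t(3) unfolding \<sigma>'_def map_add_restrict_Some_iff
    by (auto simp: attr_inv_def edges_in_def)
  have own: "\<forall>u \<in> (Z \<union> fst t - A) \<inter> pl G \<alpha>. \<sigma>' u \<noteq> None"
    using own_on_Z i(2) snd_t(2) unfolding \<sigma>'_def by (fastforce simp: map_add_def split: option.splits)
  have opp: "\<forall>u \<in> (Z \<union> fst t - A) \<inter> pl G (1 - \<alpha>). succs G U u \<subseteq> Z \<union> fst t"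
    using i(3) esc t(2) by (auto simp: escapes_def succs_def)
  have cw: "cycles_won G (attr_graph G U \<alpha> A (Z \<union> fst t) \<sigma>') \<alpha>"
  proof (rule cycles_won_attr_extend[OF inv])
    show "attr_graph G U \<alpha> A (Z \<union> fst t) \<sigma>' \<inter> Z \<times> UNIV \<subseteq> attr_graph G U \<alpha> A Z \<sigma>"
      using own_on_Z by (auto simp: attr_graph_def)
    have "cycles_won G (tangle_graph G t) \<alpha>" using t by (simp add: is_tangle_def)
    then show "cycles_won G (attr_graph G U \<alpha> A (Z \<union> fst t) \<sigma>' \<inter> (- Z) \<times> (- Z)) \<alpha>"
      using cycles_won_mono[OF attr_graph_add_tangle_outside[OF inv t(1,2) esc]]
      unfolding \<sigma>'_def by blast
  qed
  have "dom \<sigma>' \<subseteq> (Z \<union> fst t) \<inter> pl G \<alpha>" using i(1) by (auto simp: \<sigma>'_def)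
  then show ?thesis using inv t(3) edges own opp cw by (auto simp: attr_inv_def)
qed

lemma attr_inv_step:
  assumes st: "attr_step G U T \<alpha> A (Z, \<sigma>) (Z', \<sigma>')" and inv: "attr_inv G U \<alpha> A Z \<sigma>"
    and tangles: "\<forall>t\<in>T. is_tangle G t" and pg: "parity_game G" and al: "\<alpha> < 2"
  shows "attr_inv G U \<alpha> A Z' \<sigma>'"
  using st
proof (cases rule: attr_step.cases)
  case (own v w)
  have cw: "cycles_won G (attr_graph G U \<alpha> A Z' \<sigma>') \<alpha>"
  proof (rule cycles_won_attr_extend[OF inv])
    show "attr_graph G U \<alpha> A Z' \<sigma>' \<inter> Z \<times> UNIV \<subseteq> attr_graph G U \<alpha> A Z \<sigma>"
      using own by (auto simp: attr_graph_def split: if_splits)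
    have "attr_graph G U \<alpha> A Z' \<sigma>' \<inter> (- Z) \<times> (- Z) = {}"
      using own pl_opponent_disjoint[OF pg al] by (auto simp: attr_graph_def)
    then show "cycles_won G (attr_graph G U \<alpha> A Z' \<sigma>' \<inter> (- Z) \<times> (- Z)) \<alpha>"
      by (simp add: cycles_won_empty)
  qed
  show ?thesis using own inv cw pl_opponent_disjoint[OF pg al]
    by (auto simp: attr_inv_def succs_def)
next
  case (opp v)
  have cw: "cycles_won G (attr_graph G U \<alpha> A Z' \<sigma>') \<alpha>"
  proof (rule cycles_won_attr_extend[OF inv])
    show "attr_graph G U \<alpha> A Z' \<sigma>' \<inter> Z \<times> UNIV \<subseteq> attr_graph G U \<alpha> A Z \<sigma>"
      using opp by (auto simp: attr_graph_def)
    have "attr_graph G U \<alpha> A Z' \<sigma>' \<inter> (- Z) \<times> (- Z) = {}"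
      using opp inv pl_opponent_disjoint[OF pg al]
      by (auto simp: attr_graph_def attr_inv_def succs_def)
    then show "cycles_won G (attr_graph G U \<alpha> A Z' \<sigma>' \<inter> (- Z) \<times> (- Z)) \<alpha>"
      by (simp add: cycles_won_empty)
  qed
  show ?thesis using opp inv cw pl_opponent_disjoint[OF pg al]
    by (auto simp: attr_inv_def succs_def)
next
  case (target v w)
  have "attr_graph G U \<alpha> A Z' \<sigma>' = attr_graph G U \<alpha> A Z \<sigma>"
    using target by (auto simp: attr_graph_def split: if_splits)
  then show ?thesis using target inv by (auto simp: attr_inv_def)
next
  case (tangle t)
  then show ?thesis using attr_inv_add_tangle[OF inv] tangles by auto
qed

section \<open>Extracting tangles\<close>

lemma bottom_scc_path_inside:
  assumes "bottom_scc Y H C" "(x, y) \<in> H\<^sup>*" "x \<in> C"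
  shows "(x, y) \<in> (H \<inter> C \<times> C)\<^sup>* \<and> y \<in> C"
  using assms(2,3)
proof (induction rule: rtrancl_induct)
  case base then show ?case by auto
next
  case (step y z)
  then have "z \<in> C" using assms(1) by (auto simp: bottom_scc_def)
  then have "(y, z) \<in> H \<inter> C \<times> C" using step by auto
  then show ?case using step \<open>z \<in> C\<close> by (meson rtrancl.rtrancl_into_rtrancl)
qed

lemma bottom_scc_cycle:
  assumes "bottom_scc Y H C" "(u, w) \<in> H" "u \<in> C" "w \<in> C" "m \<in> C"
  shows "(m, m) \<in> (H \<inter> C \<times> C)\<^sup>+"
proof -
  have "(m, u) \<in> H\<^sup>*" "(w, m) \<in> H\<^sup>*" using assms unfolding bottom_scc_def by blast+
  then have "(m, u) \<in> (H \<inter> C \<times> C)\<^sup>*" "(w, m) \<in> (H \<inter> C \<times> C)\<^sup>*"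
    using bottom_scc_path_inside[OF assms(1)] assms(4,5) by blast+
  moreover have "(u, w) \<in> H \<inter> C \<times> C" using assms by auto
  ultimately show ?thesis by (meson rtrancl_into_trancl1 trancl_rtrancl_trancl)
qed

text \<open>Take the vertex from which the fewest vertices are reachable.\<close>
lemma bottom_scc_exists:
  assumes fin: "finite Y" and HY: "H \<subseteq> Y \<times> Y" and ne: "Y \<noteq> {}"
    and out: "\<forall>v\<in>Y. \<exists>w. (v, w) \<in> H"
  shows "\<exists>C. bottom_scc Y H C \<and> (\<exists>u\<in>C. \<exists>w\<in>C. (u, w) \<in> H)"
proof -
  define reach where "reach x = {y. (x, y) \<in> H\<^sup>*}" for x
  have rY: "x \<in> Y \<Longrightarrow> reach x \<subseteq> Y" for x
  proof
    fix y assume "x \<in> Y" "y \<in> reach x"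
    then have "(x, y) \<in> H\<^sup>*" by (simp add: reach_def)
    then show "y \<in> Y" using \<open>x \<in> Y\<close> HY by (induction rule: rtrancl_induct) auto
  qed
  obtain x0 where "x0 \<in> Y" using ne by blast
  obtain v where v: "v \<in> Y" and vmin: "\<And>u. u \<in> Y \<Longrightarrow> card (reach v) \<le> card (reach u)"
    using ex_has_least_nat[of "\<lambda>x. x \<in> Y" x0 "\<lambda>x. card (reach x)"] \<open>x0 \<in> Y\<close> by blast
  have reach_back: "(u, v) \<in> H\<^sup>*" if hu: "u \<in> reach v" for u
  proof -
    have "reach u \<subseteq> reach v" using hu by (auto simp: reach_def)
    moreover have "finite (reach v)" using rY[OF v] fin finite_subset by blast
    ultimately have "reach u = reach v" using vmin rY[OF v] hu by (meson card_seteq subsetD)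
    moreover have "v \<in> reach v" by (simp add: reach_def)
    ultimately have "v \<in> reach u" by simp
    then show ?thesis by (simp add: reach_def)
  qed
  have "bottom_scc Y H (reach v)"
    unfolding bottom_scc_def
  proof (intro conjI ballI allI impI)
    show "reach v \<noteq> {}" "reach v \<subseteq> Y" using rY[OF v] by (auto simp: reach_def)
  next
    fix u w assume "u \<in> reach v" "w \<in> reach v"
    then show "(u, w) \<in> H\<^sup>*" using reach_back by (auto simp: reach_def intro: rtrancl_trans)
  next
    fix u w assume "u \<in> reach v" "(u, w) \<in> H"
    then show "w \<in> reach v" by (auto simp: reach_def intro: rtrancl_into_rtrancl)
  qed
  moreover obtain w where "(v, w) \<in> H" using out v by blast
  moreover then have "w \<in> reach v" "v \<in> reach v" by (simp_all add: reach_def)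
  ultimately show ?thesis by blast
qed

lemma closed_for_YZ: "closed_for G U \<alpha> \<sigma> (YZ G U \<alpha> Z \<sigma>)"
  unfolding YZ_def closed_for_def by blast

lemma YZ_subset: "YZ G U \<alpha> Z \<sigma> \<subseteq> Z"
  by (auto simp: YZ_def)

lemma YZ_greatest: "X \<subseteq> Z \<Longrightarrow> closed_for G U \<alpha> \<sigma> X \<Longrightarrow> X \<subseteq> YZ G U \<alpha> Z \<sigma>"
  by (auto simp: YZ_def)

lemma Hgraph_subset: "Hgraph G U \<alpha> Z \<sigma> \<subseteq> YZ G U \<alpha> Z \<sigma> \<times> YZ G U \<alpha> Z \<sigma>"
proof clarify
  fix a b assume ab: "(a, b) \<in> Hgraph G U \<alpha> Z \<sigma>"
  have c: "closed_for G U \<alpha> \<sigma> (YZ G U \<alpha> Z \<sigma>)" by (rule closed_for_YZ)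
  from ab have a: "a \<in> YZ G U \<alpha> Z \<sigma>" by (auto simp: Hgraph_def)
  from ab consider "a \<in> pl G \<alpha>" "\<sigma> a = Some b" | "a \<in> pl G (1 - \<alpha>)" "(a, b) \<in> edges_in G U"
    by (auto simp: Hgraph_def)
  then show "a \<in> YZ G U \<alpha> Z \<sigma> \<and> b \<in> YZ G U \<alpha> Z \<sigma>"
  proof cases
    case 1
    then obtain w where "\<sigma> a = Some w" "w \<in> YZ G U \<alpha> Z \<sigma>" using c a unfolding closed_for_def by blast
    then show ?thesis using 1 a by simp
  next
    case 2 then show ?thesis using c a unfolding closed_for_def succs_def by blast
  qed
qed

lemma extract_tangles_subset: "t \<in> extract_tangles G U \<alpha> Z \<sigma> \<Longrightarrow> fst t \<subseteq> Z"
  using YZ_subset[of G U \<alpha> Z \<sigma>] by (auto simp: extract_tangles_def bottom_scc_def)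

definition attr_graph_full :: "('v, 'a) pgame_scheme \<Rightarrow> 'v set \<Rightarrow> nat \<Rightarrow> 'v set \<Rightarrow> 'v strat
    \<Rightarrow> ('v \<times> 'v) set" where
  "attr_graph_full G U \<alpha> Z \<sigma> = {(u, w). u \<in> Z \<and> ((u \<in> pl G \<alpha> \<and> \<sigma> u = Some w)
     \<or> (u \<in> pl G (1 - \<alpha>) \<and> (u, w) \<in> edges_in G U))}"

lemma cycles_won_attr_graph_full:
  assumes inv: "attr_inv G U \<alpha> A Z \<sigma>" and fin: "finite U"
    and A: "A = {v. pr G v = p} \<inter> U" and p: "p = prio G U" and al: "\<alpha> = p mod 2"
  shows "cycles_won G (attr_graph_full G U \<alpha> Z \<sigma>) \<alpha>"
proof (rule cycles_won_top_priority[where A = A and p = p])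
  have "attr_graph_full G U \<alpha> Z \<sigma> \<inter> (- A) \<times> UNIV = attr_graph G U \<alpha> A Z \<sigma>"
    by (auto simp: attr_graph_full_def attr_graph_def)
  then show "cycles_won G (attr_graph_full G U \<alpha> Z \<sigma> \<inter> (- A) \<times> UNIV) \<alpha>"
    using inv by (simp add: attr_inv_def)
  have "Z \<subseteq> U" using inv by (simp add: attr_inv_def)
  then show "\<forall>(a, b)\<in>attr_graph_full G U \<alpha> Z \<sigma>. pr G a \<le> p"
    using fin by (auto simp: attr_graph_full_def p prio_def)
  show "\<forall>a\<in>A. pr G a = p" "p mod 2 = \<alpha>" using A al by auto
qed

lemma cycles_won_extracted_component:
  assumes inv: "attr_inv G U \<alpha> A Z \<sigma>" and fin: "finite U"
    and A: "A = {v. pr G v = p} \<inter> U" and p: "p = prio G U" and al: "\<alpha> = p mod 2"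
    and t: "(C, \<sigma>') \<in> extract_tangles G U \<alpha> Z \<sigma>"
  shows "cycles_won G (Hgraph G U \<alpha> Z \<sigma> \<inter> C \<times> C) \<alpha>" and "tw G (C, \<sigma>') = \<alpha>"
proof -
  let ?H = "Hgraph G U \<alpha> Z \<sigma>"
  have bs: "bottom_scc (YZ G U \<alpha> Z \<sigma>) ?H C" and ed: "\<exists>u\<in>C. \<exists>w\<in>C. (u, w) \<in> ?H"
    using t by (auto simp: extract_tangles_def)
  have "?H \<subseteq> attr_graph_full G U \<alpha> Z \<sigma>"
    using YZ_subset[of G U \<alpha> Z \<sigma>] by (auto simp: Hgraph_def attr_graph_full_def)
  then have "?H \<inter> C \<times> C \<subseteq> attr_graph_full G U \<alpha> Z \<sigma>" by blast
  then show cw: "cycles_won G (?H \<inter> C \<times> C) \<alpha>"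
    using cycles_won_mono cycles_won_attr_graph_full[OF inv fin A p al] by blast
  have "C \<subseteq> U" "C \<noteq> {}" using bs YZ_subset[of G U \<alpha> Z \<sigma>] inv
    by (auto simp: bottom_scc_def attr_inv_def)
  then have finC: "finite C" using fin finite_subset by blast
  have "Max (pr G ` C) \<in> pr G ` C" using finC \<open>C \<noteq> {}\<close> by (intro Max_in) auto
  then obtain m where m: "m \<in> C" "pr G m = Max (pr G ` C)" by auto
  have "(m, m) \<in> (?H \<inter> C \<times> C)\<^sup>+" using ed bottom_scc_cycle[OF bs _ _ _ m(1)] by blast
  moreover have "edges_upto G (?H \<inter> C \<times> C) m = ?H \<inter> C \<times> C"
    using m finC by (auto simp: edges_upto_def)
  ultimately have "pr G m mod 2 = \<alpha>" using cw by (metis cycles_won_def)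
  then show "tw G (C, \<sigma>') = \<alpha>" using m by (simp add: tw_def prio_def)
qed

lemma extract_tangles_is_tangle:
  assumes inv: "attr_inv G U \<alpha> A Z \<sigma>" and UV: "U \<subseteq> V G" and fin: "finite U"
    and A: "A = {v. pr G v = p} \<inter> U" and p: "p = prio G U" and al: "\<alpha> = p mod 2"
    and t: "t \<in> extract_tangles G U \<alpha> Z \<sigma>"
  shows "is_tangle G t \<and> tw G t = \<alpha>"
proof -
  let ?Y = "YZ G U \<alpha> Z \<sigma>" and ?H = "Hgraph G U \<alpha> Z \<sigma>"
  obtain C where tC: "t = (C, \<sigma> |` C)" and bs: "bottom_scc ?Y ?H C"
    using t by (auto simp: extract_tangles_def)
  note cw = cycles_won_extracted_component[OF inv fin A p al t[unfolded tC]]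
  have CY: "C \<subseteq> ?Y" "C \<noteq> {}" using bs unfolding bottom_scc_def by simp_all
  have CU: "C \<subseteq> U" using CY(1) YZ_subset[of G U \<alpha> Z \<sigma>] inv unfolding attr_inv_def by blast
  have dsig: "dom \<sigma> \<subseteq> pl G \<alpha>" and sigE: "\<And>u w. \<sigma> u = Some w \<Longrightarrow> (u, w) \<in> edges_in G U"
    using inv by (auto simp: attr_inv_def)
  have strat: "\<forall>u w. (\<sigma> |` C) u = Some w \<longrightarrow> (u, w) \<in> E G \<and> w \<in> C"
  proof (intro allI impI)
    fix u w assume "(\<sigma> |` C) u = Some w"
    then have u: "u \<in> C" "\<sigma> u = Some w" by (auto simp: restrict_map_def split: if_splits)
    then have "(u, w) \<in> ?H" using CY dsig by (auto simp: Hgraph_def)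
    then show "(u, w) \<in> E G \<and> w \<in> C"
      using bs u sigE[OF u(2)] by (auto simp: bottom_scc_def edges_in_def)
  qed
  have total: "\<forall>u \<in> C \<inter> pl G \<alpha>. (\<sigma> |` C) u \<noteq> None"
    using closed_for_YZ[of G U \<alpha> \<sigma> Z] CY by (auto simp: closed_for_def)
  have "tangle_graph G (C, \<sigma> |` C) \<subseteq> ?H \<inter> C \<times> C"
  proof
    fix x assume x: "x \<in> tangle_graph G (C, \<sigma> |` C)"
    obtain u w where "x = (u, w)" by fastforce
    then have uw: "x = (u, w)" "u \<in> C" "w \<in> C"
      "(u \<in> pl G \<alpha> \<and> \<sigma> u = Some w) \<or> (u \<in> pl G (1 - \<alpha>) \<and> (u, w) \<in> E G)"
      using x cw(2) by (auto simp: tangle_graph_def)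
    then show "x \<in> ?H \<inter> C \<times> C" using CY(1) CU by (auto simp: Hgraph_def edges_in_def)
  qed
  then have "cycles_won G (tangle_graph G (C, \<sigma> |` C)) \<alpha>" using cw(1) cycles_won_mono by blast
  moreover have "dom (\<sigma> |` C) \<subseteq> C \<inter> pl G \<alpha>" using dsig by auto
  moreover have "C \<subseteq> V G" using CU UV by blast
  ultimately have "is_tangle G (C, \<sigma> |` C)"
    unfolding is_tangle_def fst_conv snd_conv cw(2) using CY(2) strat total by blast
  then show ?thesis using tC cw(2) by simp
qed

lemma extract_tangles_no_escape:
  assumes "t \<in> extract_tangles G U \<alpha> Z \<sigma>" "tw G t = \<alpha>"
  shows "escapes G U t = {}"
proof -
  obtain C where t: "t = (C, \<sigma> |` C)"
    and bs: "bottom_scc (YZ G U \<alpha> Z \<sigma>) (Hgraph G U \<alpha> Z \<sigma>) C"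
    using assms(1) by (auto simp: extract_tangles_def)
  have CY: "C \<subseteq> YZ G U \<alpha> Z \<sigma>" using bs unfolding bottom_scc_def by simp
  show ?thesis
  proof (rule ccontr)
    assume "escapes G U t \<noteq> {}"
    then obtain v u where "v \<notin> C" "u \<in> C" "u \<in> pl G (1 - \<alpha>)" "(u, v) \<in> edges_in G U"
      using t assms(2) by (auto simp: escapes_def)
    moreover then have "(u, v) \<in> Hgraph G U \<alpha> Z \<sigma>" using CY by (auto simp: Hgraph_def)
    ultimately show False using bs unfolding bottom_scc_def by blast
  qed
qed

lemma escapes_in_subgame:
  assumes "fst t \<subseteq> U" "U \<subseteq> R"
  shows "escapes G U t = escapes G R t \<inter> U"
  using assms by (auto simp: escapes_def edges_in_def)

section \<open>Closure properties of a completed attractor\<close>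

lemma attr_stable_own:
  assumes "\<not> (\<exists>s. attr_step G U T \<alpha> A (Z, \<sigma>) s)" "Z \<subseteq> U"
    "u \<in> U" "u \<in> pl G \<alpha>" "w \<in> Z" "(u, w) \<in> E G"
  shows "u \<in> Z"
proof (rule ccontr)
  assume "u \<notin> Z"
  then have "attr_step G U T \<alpha> A (Z, \<sigma>) (insert u Z, \<sigma>(u \<mapsto> w))"
    using assms by (intro attr_step.own) (auto simp: edges_in_def)
  then show False using assms(1) by blast
qed

lemma attr_stable_opp:
  assumes "\<not> (\<exists>s. attr_step G U T \<alpha> A (Z, \<sigma>) s)"
    "u \<in> U" "u \<in> pl G (1 - \<alpha>)" "succs G U u \<subseteq> Z"
  shows "u \<in> Z"
proof (rule ccontr)
  assume "u \<notin> Z"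
  then have "attr_step G U T \<alpha> A (Z, \<sigma>) (insert u Z, \<sigma>)"
    using assms by (intro attr_step.opp) auto
  then show False using assms(1) by blast
qed

lemma attr_stable_complement_total:
  assumes "\<not> (\<exists>s. attr_step G U T \<alpha> A (Z, \<sigma>) s)" "Z \<subseteq> U" "U \<subseteq> V G" "\<alpha> < 2"
    and total: "\<forall>v\<in>U. \<exists>w\<in>U. (v, w) \<in> E G"
  shows "\<forall>v\<in>U - Z. \<exists>w\<in>U - Z. (v, w) \<in> E G"
proof
  fix v assume v: "v \<in> U - Z"
  then have "v \<in> V G" using assms(3) by blast
  then consider "v \<in> pl G \<alpha>" | "v \<in> pl G (1 - \<alpha>)" using pl_or_opponent[OF assms(4), of v G] by blast
  then show "\<exists>w\<in>U - Z. (v, w) \<in> E G"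
  proof cases
    case 1
    obtain w where "w \<in> U" "(v, w) \<in> E G" using total v by blast
    moreover have "w \<notin> Z"
      using attr_stable_own[OF assms(1,2) _ 1 _ \<open>(v, w) \<in> E G\<close>] v by blast
    ultimately show ?thesis by blast
  next
    case 2
    then have "\<not> succs G U v \<subseteq> Z" using attr_stable_opp[OF assms(1)] v by blast
    then show ?thesis by (auto simp: succs_def edges_in_def)
  qed
qed

text \<open>The attractor strategy is total on U, so the graph it induces has no sinks and hence a
  bottom SCC.\<close>
lemma extract_tangles_nonempty:
  assumes inv: "attr_inv G U \<alpha> A U \<sigma>" and UV: "U \<subseteq> V G" and fin: "finite U"
    and ne: "U \<noteq> {}" and tot: "\<forall>v\<in>U. \<exists>w\<in>U. (v, w) \<in> E G" and al: "\<alpha> < 2"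
    and stable: "\<not> (\<exists>s. attr_step G U T \<alpha> A (U, \<sigma>) s)"
  shows "extract_tangles G U \<alpha> U \<sigma> \<noteq> {}"
proof -
  have own: "\<exists>w. \<sigma> v = Some w \<and> w \<in> U" if v: "v \<in> U \<inter> pl G \<alpha>" for v
  proof -
    have "\<sigma> v \<noteq> None"
    proof
      assume none: "\<sigma> v = None"
      then have "v \<in> A" using inv v unfolding attr_inv_def by blast
      obtain w where "w \<in> U" "(v, w) \<in> E G" using tot v by blast
      then have "attr_step G U T \<alpha> A (U, \<sigma>) (U, \<sigma>(v \<mapsto> w))"
        using \<open>v \<in> A\<close> v none by (intro attr_step.target) (auto simp: edges_in_def)
      then show False using stable by blast
    qed
    then show ?thesis using inv by (auto simp: attr_inv_def)
  qed
  then have cl: "closed_for G U \<alpha> \<sigma> U" by (auto simp: closed_for_def succs_def edges_in_def)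
  have YU: "YZ G U \<alpha> U \<sigma> = U" using YZ_subset[of G U \<alpha> U \<sigma>] YZ_greatest[OF _ cl] by blast
  let ?H = "Hgraph G U \<alpha> U \<sigma>"
  have HY: "?H \<subseteq> U \<times> U" using Hgraph_subset[of G U \<alpha> U \<sigma>] YU by simp
  have out: "\<forall>v\<in>U. \<exists>w. (v, w) \<in> ?H"
  proof
    fix v assume v: "v \<in> U"
    then have "v \<in> V G" using UV by blast
    then consider "v \<in> pl G \<alpha>" | "v \<in> pl G (1 - \<alpha>)" using pl_or_opponent[OF al, of v G] by blast
    then show "\<exists>w. (v, w) \<in> ?H"
    proof cases
      case 1
      then obtain w where "\<sigma> v = Some w" using own v by blast
      then show ?thesis using 1 v by (auto simp: Hgraph_def YU)
    next
      case 2
      obtain w where "w \<in> U" "(v, w) \<in> E G" using tot v by blast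
      then show ?thesis using 2 v by (auto simp: Hgraph_def edges_in_def YU)
    qed
  qed
  obtain C where "bottom_scc U ?H C" "\<exists>u\<in>C. \<exists>w\<in>C. (u, w) \<in> ?H"
    using bottom_scc_exists[OF fin HY ne out] by blast
  then have "(C, \<sigma> |` C) \<in> extract_tangles G U \<alpha> U \<sigma>"
    unfolding extract_tangles_def using YU by simp
  then show ?thesis by blast
qed

section \<open>The attractor of a dominion\<close>

context
  fixes G :: "('v, 'a) pgame_scheme" and R Z :: "'v set" and \<alpha> :: nat and d :: "'v tangle"
    and \<sigma> :: "'v strat"
  assumes attr: "attr_inv G R \<alpha> (fst d) Z \<sigma>" and dominion: "is_tangle G d" "tw G d = \<alpha>"
    "escapes G R d = {}"
begin

lemma attr_dominion_strategy:
  "(\<sigma> ++ snd d) u = (if u \<in> fst d then snd d u else \<sigma> u)"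
proof (cases "snd d u")
  case None
  show ?thesis
  proof (cases "u \<in> fst d")
    case True
    then have "u \<notin> pl G \<alpha>" using None dominion(1,2) unfolding is_tangle_def by force
    then have "\<sigma> u = None" using attr by (auto simp: attr_inv_def)
    then show ?thesis using None by (simp add: map_add_def)
  qed (use None in \<open>simp add: map_add_def\<close>)
next
  case (Some w)
  then show ?thesis using dominion(1) by (auto simp: is_tangle_def)
qed

lemma attr_dominion_dom: "dom (\<sigma> ++ snd d) \<subseteq> Z \<inter> pl G \<alpha>"
  using attr dominion(1,2) by (auto simp: attr_inv_def is_tangle_def)

lemma attr_dominion_edge:
  assumes "(\<sigma> ++ snd d) u = Some w"
  shows "(u, w) \<in> edges_in G R \<and> w \<in> Z"
proof (cases "u \<in> fst d")
  case True
  then have "snd d u = Some w" using assms attr_dominion_strategy by simp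
  then have "w \<in> fst d" "(u, w) \<in> E G" using dominion(1) by (auto simp: is_tangle_def)
  then show ?thesis using True attr by (auto simp: attr_inv_def edges_in_def)
next
  case False
  then show ?thesis using assms attr attr_dominion_strategy by (auto simp: attr_inv_def)
qed

lemma attr_dominion_own:
  assumes "u \<in> Z" "u \<in> pl G \<alpha>"
  obtains w where "(\<sigma> ++ snd d) u = Some w" "w \<in> Z" "(u, w) \<in> E G"
proof (cases "u \<in> fst d")
  case True
  then obtain w where "snd d u = Some w" using dominion(1,2) assms(2) unfolding is_tangle_def by blast
  moreover have "w \<in> fst d" "(u, w) \<in> E G"
    using calculation dominion(1) by (auto simp: is_tangle_def)
  ultimately show ?thesis using that True attr attr_dominion_strategy by (auto simp: attr_inv_def)
next
  case False
  then obtain w where "\<sigma> u = Some w" using attr assms unfolding attr_inv_def by blast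
  then show ?thesis using that False attr attr_dominion_strategy
    by (auto simp: attr_inv_def edges_in_def)
qed

lemma attr_dominion_opp:
  assumes "u \<in> Z" "u \<in> pl G (1 - \<alpha>)"
  shows "succs G R u \<subseteq> Z"
proof (cases "u \<in> fst d")
  case True
  have "\<And>w. (u, w) \<in> edges_in G R \<Longrightarrow> w \<in> fst d"
    using True assms(2) dominion(2,3) unfolding escapes_def by blast
  then show ?thesis using attr by (auto simp: succs_def attr_inv_def)
next
  case False
  then show ?thesis using attr assms by (auto simp: attr_inv_def)
qed

text \<open>Inside the tangle the strategy is that of the tangle, outside it that of the attractor.\<close>
lemma cycles_won_attr_dominion: "cycles_won G (attr_graph_full G R \<alpha> Z (\<sigma> ++ snd d)) \<alpha>"
proof (rule cycles_won_glue[of "tangle_graph G d" "fst d"])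
  let ?H = "attr_graph_full G R \<alpha> Z (\<sigma> ++ snd d)"
  show "tangle_graph G d \<subseteq> fst d \<times> fst d" by (auto simp: tangle_graph_def)
  show "cycles_won G (tangle_graph G d) \<alpha>" using dominion by (simp add: is_tangle_def)
  have "\<And>u w. u \<in> fst d \<Longrightarrow> u \<in> pl G (1 - \<alpha>) \<Longrightarrow> (u, w) \<in> edges_in G R \<Longrightarrow> w \<in> fst d"
    using dominion(2,3) unfolding escapes_def by blast
  moreover have "\<And>u w. snd d u = Some w \<Longrightarrow> w \<in> fst d" using dominion(1) by (auto simp: is_tangle_def)
  ultimately show "?H \<inter> fst d \<times> UNIV \<subseteq> tangle_graph G d"
    using dominion(2) by (auto simp: attr_graph_full_def tangle_graph_def attr_dominion_strategy
        edges_in_def)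
  have "?H \<inter> (- fst d) \<times> (- fst d) \<subseteq> attr_graph G R \<alpha> (fst d) Z \<sigma>"
    by (auto simp: attr_graph_full_def attr_graph_def attr_dominion_strategy)
  then show "cycles_won G (?H \<inter> (- fst d) \<times> (- fst d)) \<alpha>"
    using attr cycles_won_mono by (auto simp: attr_inv_def)
qed

end

section \<open>Partial solutions\<close>

definition region_graph :: "('v, 'a) pgame_scheme \<Rightarrow> (nat \<Rightarrow> 'v set) \<Rightarrow> (nat \<Rightarrow> 'v strat) \<Rightarrow> nat
    \<Rightarrow> ('v \<times> 'v) set" where
  "region_graph G W S \<beta> = {(u, w). u \<in> W \<beta> \<and> ((u \<in> pl G \<beta> \<and> S \<beta> u = Some w)
     \<or> (u \<in> pl G (1 - \<beta>) \<and> (u, w) \<in> E G))}"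

definition region_inv :: "('v, 'a) pgame_scheme \<Rightarrow> 'v set \<Rightarrow> (nat \<Rightarrow> 'v set) \<Rightarrow> (nat \<Rightarrow> 'v strat)
    \<Rightarrow> nat \<Rightarrow> bool" where
  "region_inv G R W S \<beta> \<longleftrightarrow> strategy G \<beta> (S \<beta>) \<and> dom (S \<beta>) \<subseteq> W \<beta> \<and>
     (\<forall>u \<in> W \<beta> \<inter> pl G \<beta>. \<exists>w. S \<beta> u = Some w \<and> w \<in> W \<beta>) \<and>
     (\<forall>u \<in> W \<beta> \<inter> pl G (1 - \<beta>). \<forall>w. (u, w) \<in> E G \<longrightarrow> w \<in> W \<beta>) \<and>
     (\<forall>u \<in> R \<inter> pl G \<beta>. \<forall>w. (u, w) \<in> E G \<longrightarrow> w \<notin> W \<beta>) \<and>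
     cycles_won G (region_graph G W S \<beta>) \<beta>"

definition solve_inv :: "('v, 'a) pgame_scheme \<Rightarrow> 'v set \<Rightarrow> (nat \<Rightarrow> 'v set) \<Rightarrow> (nat \<Rightarrow> 'v strat)
    \<Rightarrow> bool" where
  "solve_inv G R W S \<longleftrightarrow> R \<subseteq> V G \<and> W 0 \<union> W 1 \<union> R = V G \<and> W 0 \<inter> W 1 = {} \<and>
     W 0 \<inter> R = {} \<and> W 1 \<inter> R = {} \<and> (\<forall>v\<in>R. \<exists>w\<in>R. (v, w) \<in> E G) \<and>
     region_inv G R W S 0 \<and> region_inv G R W S 1"

lemma solve_inv_init: "parity_game G \<Longrightarrow> solve_inv G (V G) (\<lambda>_. {}) (\<lambda>_. Map.empty)"
proof -
  assume pg: "parity_game G"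
  have "region_graph G (\<lambda>_. {}) (\<lambda>_. Map.empty) \<beta> = {}" for \<beta> by (simp add: region_graph_def)
  then have "region_inv G (V G) (\<lambda>_. {}) (\<lambda>_. Map.empty) \<beta>" for \<beta>
    by (simp add: region_inv_def strategy_def cycles_won_empty)
  moreover have "\<forall>v\<in>V G. \<exists>w\<in>V G. (v, w) \<in> E G" using pg unfolding parity_game_def by blast
  ultimately show ?thesis by (simp add: solve_inv_def)
qed

lemma region_graph_subset:
  assumes "region_inv G R W S \<beta>"
  shows "region_graph G W S \<beta> \<subseteq> W \<beta> \<times> W \<beta>"
proof clarify
  fix u w assume uw: "(u, w) \<in> region_graph G W S \<beta>"
  then have u: "u \<in> W \<beta>" by (simp add: region_graph_def)
  from uw consider "u \<in> pl G \<beta>" "S \<beta> u = Some w" | "u \<in> pl G (1 - \<beta>)" "(u, w) \<in> E G"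
    by (auto simp: region_graph_def)
  then show "u \<in> W \<beta> \<and> w \<in> W \<beta>"
  proof cases
    case 1
    then obtain w' where "S \<beta> u = Some w'" "w' \<in> W \<beta>"
      using assms u unfolding region_inv_def by blast
    then show ?thesis using 1 u by simp
  next
    case 2 then show ?thesis using assms u unfolding region_inv_def by blast
  qed
qed

lemma region_inv_antimono: "region_inv G R W S \<beta> \<Longrightarrow> R' \<subseteq> R \<Longrightarrow> region_inv G R' W S \<beta>"
  unfolding region_inv_def by blast

context
  fixes G :: "('v, 'a) pgame_scheme" and R Z :: "'v set" and \<alpha> :: nat and d :: "'v tangle"
    and \<sigma> :: "'v strat" and W :: "nat \<Rightarrow> 'v set" and S :: "nat \<Rightarrow> 'v strat"
  assumes attr: "attr_inv G R \<alpha> (fst d) Z \<sigma>" and dominion: "is_tangle G d" "tw G d = \<alpha>"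
    "escapes G R d = {}"
    and region: "region_inv G R W S \<alpha>" "W \<alpha> \<inter> R = {}"
    and opp_out: "\<forall>u\<in>R \<inter> pl G (1 - \<alpha>). \<forall>w. (u, w) \<in> E G \<longrightarrow> w \<in> W \<alpha> \<union> R"
begin

lemma extended_strategy_on_region:
  assumes "u \<in> W \<alpha>"
  shows "(S \<alpha> ++ \<sigma> ++ snd d) u = S \<alpha> u"
proof -
  have "u \<notin> Z" using assms attr region(2) by (auto simp: attr_inv_def)
  then have "\<sigma> u = None" "snd d u = None"
    using attr dominion(1) by (auto simp: attr_inv_def is_tangle_def)
  then show ?thesis by (simp add: map_add_def)
qed

lemma extended_strategy_on_R:
  assumes "u \<in> R"
  shows "(S \<alpha> ++ \<sigma> ++ snd d) u = (\<sigma> ++ snd d) u"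
proof -
  have "S \<alpha> u = None" using assms region by (auto simp: region_inv_def)
  then show ?thesis by (simp add: map_add_def split: option.splits)
qed

lemma cycles_won_region_attr_dominion:
  "cycles_won G (region_graph G (W(\<alpha> := W \<alpha> \<union> Z)) (S(\<alpha> := S \<alpha> ++ \<sigma> ++ snd d)) \<alpha>) \<alpha>"
proof -
  define S' where "S' = S \<alpha> ++ \<sigma> ++ snd d"
  let ?H = "region_graph G (W(\<alpha> := W \<alpha> \<union> Z)) (S(\<alpha> := S')) \<alpha>"
  have ZR: "Z \<subseteq> R" using attr by (simp add: attr_inv_def)
  have inside: "?H \<inter> W \<alpha> \<times> UNIV \<subseteq> region_graph G W S \<alpha>"
  proof clarify
    fix u w assume "(u, w) \<in> ?H" "u \<in> W \<alpha>"
    moreover have "S' u = S \<alpha> u" using extended_strategy_on_region[OF \<open>u \<in> W \<alpha>\<close>] S'_def by simp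
    ultimately show "(u, w) \<in> region_graph G W S \<alpha>" by (simp add: region_graph_def)
  qed
  have "?H \<inter> (- W \<alpha>) \<times> (- W \<alpha>) \<subseteq> attr_graph_full G R \<alpha> Z (\<sigma> ++ snd d)"
  proof clarify
    fix u w assume uw: "(u, w) \<in> ?H" "u \<notin> W \<alpha>" "w \<notin> W \<alpha>"
    then have u: "u \<in> Z" "u \<in> R" using ZR by (auto simp: region_graph_def)
    then have "S' u = (\<sigma> ++ snd d) u" using extended_strategy_on_R S'_def by simp
    then show "(u, w) \<in> attr_graph_full G R \<alpha> Z (\<sigma> ++ snd d)"
      using uw u opp_out by (auto simp: region_graph_def attr_graph_full_def edges_in_def)
  qed
  then have outside: "cycles_won G (?H \<inter> (- W \<alpha>) \<times> (- W \<alpha>)) \<alpha>"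
    using cycles_won_attr_dominion[OF attr dominion] cycles_won_mono by blast
  have "cycles_won G (region_graph G W S \<alpha>) \<alpha>" using region by (simp add: region_inv_def)
  from cycles_won_glue[OF region_graph_subset[OF region(1)] this inside outside]
  show ?thesis unfolding S'_def .
qed

lemma region_inv_attr_dominion:
  assumes stable: "\<not> (\<exists>s. attr_step G R {} \<alpha> (fst d) (Z, \<sigma>) s)"
  shows "region_inv G (R - Z) (W(\<alpha> := W \<alpha> \<union> Z)) (S(\<alpha> := S \<alpha> ++ \<sigma> ++ snd d)) \<alpha>"
proof -
  define S' where "S' = S \<alpha> ++ \<sigma> ++ snd d"
  have ZR: "Z \<subseteq> R" using attr by (simp add: attr_inv_def)
  have on_W: "S' u = S \<alpha> u" if "u \<in> W \<alpha>" for u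
    using extended_strategy_on_region[OF that] by (simp add: S'_def)
  have on_Z: "S' u = (\<sigma> ++ snd d) u" if "u \<in> Z" for u
    using extended_strategy_on_R that ZR by (simp add: S'_def subset_iff)
  have "strategy G \<alpha> S'"
    using region(1) attr_dominion_dom[OF attr dominion] attr_dominion_edge[OF attr dominion]
    by (auto simp: S'_def strategy_def region_inv_def map_add_Some_iff edges_in_def)
  moreover have "dom S' \<subseteq> W \<alpha> \<union> Z"
    using region(1) attr_dominion_dom[OF attr dominion] by (auto simp: S'_def region_inv_def)
  moreover have "\<exists>w. S' u = Some w \<and> w \<in> W \<alpha> \<union> Z" if "u \<in> (W \<alpha> \<union> Z) \<inter> pl G \<alpha>" for u
  proof (cases "u \<in> W \<alpha>")
    case True then show ?thesis using region(1) that on_W by (force simp: region_inv_def)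
  next
    case False
    then have "u \<in> Z" "u \<in> pl G \<alpha>" using that by auto
    then obtain w where "(\<sigma> ++ snd d) u = Some w" "w \<in> Z"
      by (rule attr_dominion_own[OF attr dominion])
    then show ?thesis using on_Z False that by auto
  qed
  moreover have "w \<in> W \<alpha> \<union> Z" if "u \<in> (W \<alpha> \<union> Z) \<inter> pl G (1 - \<alpha>)" "(u, w) \<in> E G" for u w
  proof (cases "u \<in> W \<alpha> \<or> w \<in> W \<alpha>")
    case True then show ?thesis using region(1) that unfolding region_inv_def by blast
  next
    case False
    then have "(u, w) \<in> edges_in G R" using that opp_out ZR by (auto simp: edges_in_def)
    then show ?thesis using attr_dominion_opp[OF attr dominion] that False by (auto simp: succs_def)
  qed
  moreover have "w \<notin> W \<alpha> \<union> Z" if "u \<in> (R - Z) \<inter> pl G \<alpha>" "(u, w) \<in> E G" for u w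
    using that region(1) attr_stable_own[OF stable ZR] unfolding region_inv_def by blast
  moreover note cycles_won_region_attr_dominion
  ultimately show ?thesis unfolding region_inv_def S'_def[symmetric] by auto
qed

end

lemma solve_inv_attr_done:
  assumes si: "solve_inv G R W S" and pg: "parity_game G" and dominion: "is_tangle G d"
    "escapes G R d = {}" and attr: "attr_inv G R \<alpha> (fst d) Z \<sigma>" and al: "\<alpha> = tw G d"
    and stable: "\<not> (\<exists>s. attr_step G R {} \<alpha> (fst d) (Z, \<sigma>) s)"
  shows "solve_inv G (R - Z) (W(\<alpha> := W \<alpha> \<union> Z)) (S(\<alpha> := S \<alpha> ++ \<sigma> ++ snd d))"
proof -
  have \<alpha>: "\<alpha> = 0 \<or> \<alpha> = 1" using al tw_less_2[of G d] by linarith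
  have RV: "R \<subseteq> V G" and ZR: "Z \<subseteq> R" and total: "\<forall>v\<in>R. \<exists>w\<in>R. (v, w) \<in> E G"
    using si attr by (auto simp: solve_inv_def attr_inv_def)
  have cover: "W \<alpha> \<union> W (1 - \<alpha>) \<union> R = V G" and disj: "W \<alpha> \<inter> R = {}"
    and regions: "region_inv G R W S \<alpha>" "region_inv G R W S (1 - \<alpha>)"
    using \<alpha> si by (auto simp: solve_inv_def)
  have opp_out: "\<forall>u\<in>R \<inter> pl G (1 - \<alpha>). \<forall>w. (u, w) \<in> E G \<longrightarrow> w \<in> W \<alpha> \<union> R"
  proof (intro ballI allI impI)
    fix u w assume "u \<in> R \<inter> pl G (1 - \<alpha>)" "(u, w) \<in> E G"
    moreover have "1 - (1 - \<alpha>) = \<alpha>" using \<alpha> by auto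
    ultimately have "w \<notin> W (1 - \<alpha>)" using regions(2) unfolding region_inv_def by auto
    then show "w \<in> W \<alpha> \<union> R" using cover parity_game_edge_in_V[OF pg \<open>(u, w) \<in> E G\<close>] by blast
  qed
  have opponent_unchanged: "(W(\<alpha> := W \<alpha> \<union> Z)) (1 - \<alpha>) = W (1 - \<alpha>)"
    "(S(\<alpha> := S \<alpha> ++ \<sigma> ++ snd d)) (1 - \<alpha>) = S (1 - \<alpha>)" using \<alpha> by auto
  have "region_inv G (R - Z) (W(\<alpha> := W \<alpha> \<union> Z)) (S(\<alpha> := S \<alpha> ++ \<sigma> ++ snd d)) \<alpha>"
    using region_inv_attr_dominion[OF attr dominion(1) al[symmetric] dominion(2) regions(1) disj
        opp_out stable] .
  moreover have "region_inv G (R - Z) (W(\<alpha> := W \<alpha> \<union> Z)) (S(\<alpha> := S \<alpha> ++ \<sigma> ++ snd d)) (1 - \<alpha>)"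
    using region_inv_antimono[OF regions(2), of "R - Z"] opponent_unchanged
    by (simp add: region_inv_def region_graph_def)
  moreover have "\<forall>v\<in>R - Z. \<exists>w\<in>R - Z. (v, w) \<in> E G"
    using attr_stable_complement_total[OF stable ZR RV _ total] \<alpha> by auto
  ultimately show ?thesis using si ZR \<alpha> unfolding solve_inv_def by (elim disjE) auto
qed

section \<open>Winning regions\<close>

lemma consistent_play_exists:
  assumes pg: "parity_game G" and v: "v \<in> V G" and al: "\<alpha> < 2"
    and s1: "strategy G \<alpha> \<sigma>1" and s2: "strategy G (1 - \<alpha>) \<sigma>2"
  shows "\<exists>\<pi>. play G \<pi> \<and> \<pi> 0 = v \<and> consistent \<sigma>1 \<pi> \<and> consistent \<sigma>2 \<pi>"
proof -
  define nxt where "nxt x = (case \<sigma>1 x of Some w \<Rightarrow> w | None \<Rightarrow>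
      (case \<sigma>2 x of Some w \<Rightarrow> w | None \<Rightarrow> (SOME w. (x, w) \<in> E G)))" for x
  have ed: "(x, nxt x) \<in> E G" if "x \<in> V G" for x
  proof (cases "\<sigma>1 x")
    case (Some w) then show ?thesis using s1 by (simp add: nxt_def strategy_def)
  next
    case None
    show ?thesis
    proof (cases "\<sigma>2 x")
      case (Some w) then show ?thesis using s2 None by (simp add: nxt_def strategy_def)
    next
      case None2: None
      have "\<exists>w. (x, w) \<in> E G" using pg that by (simp add: parity_game_def)
      then have "(x, SOME w. (x, w) \<in> E G) \<in> E G" by (rule someI_ex)
      then show ?thesis using None None2 by (simp add: nxt_def)
    qed
  qed
  define \<pi> where "\<pi> i = (nxt ^^ i) v" for i
  have pS: "\<pi> (Suc i) = nxt (\<pi> i)" for i by (simp add: \<pi>_def)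
  have inV: "\<pi> i \<in> V G" for i
    by (induction i) (use v ed pS parity_game_edge_in_V[OF pg] in \<open>auto simp: \<pi>_def\<close>)
  have "play G \<pi>" using ed inV pS by (simp add: play_def)
  moreover have "consistent \<sigma>1 \<pi>" by (auto simp: consistent_def pS nxt_def)
  moreover have "consistent \<sigma>2 \<pi>"
  proof (unfold consistent_def, intro allI impI)
    fix i assume "\<pi> i \<in> dom \<sigma>2"
    then have "\<pi> i \<in> pl G (1 - \<alpha>)" using s2 by (auto simp: strategy_def)
    then have "\<sigma>1 (\<pi> i) = None" using s1 pl_opponent_disjoint[OF pg al] by (auto simp: strategy_def)
    then show "\<sigma>2 (\<pi> i) = Some (\<pi> (Suc i))" using \<open>\<pi> i \<in> dom \<sigma>2\<close> by (auto simp: pS nxt_def)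
  qed
  ultimately show ?thesis by (auto simp: \<pi>_def)
qed

lemma region_inv_play_winner:
  assumes pg: "parity_game G" and reg: "region_inv G R W S \<beta>" and WV: "W \<beta> \<subseteq> V G"
    and b2: "\<beta> < 2" and \<pi>: "play G \<pi>" "\<pi> 0 \<in> W \<beta>" "consistent (S \<beta>) \<pi>"
  shows "play_winner G \<pi> = \<beta>"
proof -
  have step: "\<pi> (Suc i) \<in> W \<beta> \<and> (\<pi> i, \<pi> (Suc i)) \<in> region_graph G W S \<beta>" if hi: "\<pi> i \<in> W \<beta>" for i
  proof -
    have "\<pi> i \<in> V G" using hi WV by blast
    then consider "\<pi> i \<in> pl G \<beta>" | "\<pi> i \<in> pl G (1 - \<beta>)" using pl_or_opponent[OF b2, of "\<pi> i" G] by blast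
    then show ?thesis
    proof cases
      case 1
      then obtain w where w: "S \<beta> (\<pi> i) = Some w" "w \<in> W \<beta>"
        using reg hi unfolding region_inv_def by blast
      then have "S \<beta> (\<pi> i) = Some (\<pi> (Suc i))" using \<pi>(3) by (auto simp: consistent_def)
      then show ?thesis using w 1 hi by (auto simp: region_graph_def)
    next
      case 2
      have "(\<pi> i, \<pi> (Suc i)) \<in> E G" using \<pi>(1) by (simp add: play_def)
      then show ?thesis using reg 2 hi by (auto simp: region_graph_def region_inv_def)
    qed
  qed
  have stay: "\<pi> i \<in> W \<beta>" for i
    by (induction i) (use \<pi>(2) step in auto)
  show ?thesis
  proof (rule play_winner_if_cycles_won)
    show "finite (V G)" using pg by (simp add: parity_game_def)
    show "\<forall>i. \<pi> i \<in> V G" using stay WV by blast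
    show "\<forall>i. (\<pi> i, \<pi> (Suc i)) \<in> region_graph G W S \<beta>" using stay step by blast
    show "cycles_won G (region_graph G W S \<beta>) \<beta>" using reg by (simp add: region_inv_def)
  qed
qed

lemma solve_inv_play_winner:
  assumes pg: "parity_game G" and si: "solve_inv G {} W S" and \<beta>: "\<beta> \<in> {0, 1}"
    and \<pi>: "play G \<pi>" "\<pi> 0 \<in> W \<beta>" "consistent (S \<beta>) \<pi>"
  shows "play_winner G \<pi> = \<beta>"
proof -
  have "region_inv G {} W S \<beta>" "W \<beta> \<subseteq> V G" "\<beta> < 2" using si \<beta> by (auto simp: solve_inv_def)
  from region_inv_play_winner[OF pg this \<pi>] show ?thesis .
qed

text \<open>A vertex won by beta cannot lie in the region of the opponent: the play consistent with
  both winning strategies would be won by both players.\<close>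
lemma solve_inv_region_eq_won_by:
  assumes pg: "parity_game G" and si: "solve_inv G {} W S" and \<beta>: "\<beta> \<in> {0, 1}"
  shows "W \<beta> = {v. won_by G \<beta> v}"
proof
  have "strategy G \<beta> (S \<beta>)" "W \<beta> \<subseteq> V G" using si \<beta> by (auto simp: solve_inv_def region_inv_def)
  then show "W \<beta> \<subseteq> {v. won_by G \<beta> v}"
    using solve_inv_play_winner[OF pg si \<beta>] unfolding won_by_def by blast
next
  show "{v. won_by G \<beta> v} \<subseteq> W \<beta>"
  proof
    fix v assume "v \<in> {v. won_by G \<beta> v}"
    then obtain \<sigma> where v: "v \<in> V G" and s: "strategy G \<beta> \<sigma>"
      and win: "\<And>\<pi>. play G \<pi> \<and> \<pi> 0 = v \<and> consistent \<sigma> \<pi> \<longrightarrow> play_winner G \<pi> = \<beta>"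
      unfolding won_by_def by blast
    show "v \<in> W \<beta>"
    proof (rule ccontr)
      assume "v \<notin> W \<beta>"
      have \<beta>': "1 - \<beta> \<in> {0, 1}" "\<beta> < 2" "1 - \<beta> \<noteq> \<beta>" using \<beta> by auto
      have "v \<in> W (1 - \<beta>)" using \<open>v \<notin> W \<beta>\<close> v si \<beta> by (auto simp: solve_inv_def)
      moreover have "strategy G (1 - \<beta>) (S (1 - \<beta>))"
        using si \<beta>' by (auto simp: solve_inv_def region_inv_def)
      then obtain \<pi> where \<pi>: "play G \<pi>" "\<pi> 0 = v" "consistent \<sigma> \<pi>" "consistent (S (1 - \<beta>)) \<pi>"
        using consistent_play_exists[OF pg v \<beta>'(2) s] by blast
      ultimately have "play_winner G \<pi> = 1 - \<beta>" using solve_inv_play_winner[OF pg si \<beta>'(1)] by simp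
      then show False using win \<pi> \<beta>'(3) by simp
    qed
  qed
qed

lemma solve_inv_solves:
  assumes pg: "parity_game G" and si: "solve_inv G {} W S"
  shows "solves G W S"
  using si solve_inv_play_winner[OF pg si] solve_inv_region_eq_won_by[OF pg si]
  by (auto simp: solves_def solve_inv_def region_inv_def)

section \<open>The invariant of the algorithm\<close>

text \<open>Invariant of a round of search. It holds because a tangle of T with an escape, all of
  whose escapes lie in the removed part, would have been pulled in by the tangle attractor.\<close>
definition trapped_tangles_closed :: "('v, 'a) pgame_scheme \<Rightarrow> 'v set \<Rightarrow> 'v tangle set
    \<Rightarrow> ('v \<Rightarrow> nat option) \<Rightarrow> bool" where
  "trapped_tangles_closed G R T r \<longleftrightarrow>
     (\<forall>t\<in>T. fst t \<subseteq> R - dom r \<longrightarrow> escapes G R t \<subseteq> dom r \<longrightarrow> escapes G R t = {})"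

lemma trapped_tangles_closed_remove_attr:
  assumes trapped: "trapped_tangles_closed G R T r" and tangles: "\<forall>t\<in>T. is_tangle G t"
    and U: "U = R - dom r" and ZU: "Z \<subseteq> U" and al: "\<alpha> < 2"
    and stable: "\<not> (\<exists>s. attr_step G U T \<alpha> A (Z, \<sigma>) s)"
  shows "trapped_tangles_closed G R T (\<lambda>v. if v \<in> Z then Some p else r v)"
  unfolding trapped_tangles_closed_def
proof (intro ballI impI)
  let ?r = "\<lambda>v. if v \<in> Z then Some p else r v"
  have dom_r: "dom ?r = Z \<union> dom r" by (auto split: if_splits)
  fix t assume t: "t \<in> T" and ft: "fst t \<subseteq> R - dom ?r" and es: "escapes G R t \<subseteq> dom ?r"
  have ftU: "fst t \<subseteq> U - Z" using ft U dom_r by auto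
  show "escapes G R t = {}"
  proof (cases "escapes G R t \<inter> Z = {}")
    case True
    then have "escapes G R t \<subseteq> dom r" using es dom_r by auto
    moreover have "fst t \<subseteq> R - dom r" using ftU U by auto
    ultimately show ?thesis using trapped t by (auto simp: trapped_tangles_closed_def)
  next
    case False
    then obtain e where "e \<in> escapes G R t" "e \<in> Z" by blast
    then obtain u where e: "e \<in> Z" "e \<notin> fst t" "u \<in> fst t" "u \<in> pl G (1 - tw G t)"
      "(u, e) \<in> edges_in G R"
      by (auto simp: escapes_def)
    show ?thesis
    proof (cases "tw G t = \<alpha>")
      case True
      have esU: "escapes G U t = escapes G R t \<inter> U"
        by (rule escapes_in_subgame) (use ftU U in auto)
      have "escapes G U t \<subseteq> Z" using esU es dom_r U by auto
      moreover have "escapes G U t \<noteq> {}" using esU \<open>e \<in> escapes G R t\<close> e(1) ZU by auto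
      moreover have "fst t \<noteq> {}" using tangles t by (simp add: is_tangle_def)
      then have "\<not> fst t \<subseteq> Z" "fst t \<subseteq> U" using ftU by auto
      ultimately have "attr_step G U T \<alpha> A (Z, \<sigma>) (Z \<union> fst t, (snd t |` (fst t \<inter> pl G \<alpha>)) ++ \<sigma>)"
        using t True by (intro attr_step.tangle) auto
      then show ?thesis using stable by blast
    next
      case False
      then have "1 - tw G t = \<alpha>" using al tw_less_2[of G t] by auto
      then have "u \<in> pl G \<alpha>" using e(4) by simp
      moreover have "u \<in> U" "(u, e) \<in> E G" using e(3,5) ftU by (auto simp: edges_in_def)
      ultimately have "u \<in> Z" using attr_stable_own[OF stable ZU] e(1) by blast
      then show ?thesis using e(3) ftU by blast
    qed
  qed
qed

text \<open>The new tangle is what bounds the number of rounds of search.\<close>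
lemma extract_tangles_new:
  assumes trapped: "trapped_tangles_closed G R T r" and U: "U = R - dom r"
    and attr: "attr_inv G U \<alpha> A U \<sigma>" and UV: "U \<subseteq> V G" and fin: "finite U"
    and ne: "U \<noteq> {}" and total: "\<forall>v\<in>U. \<exists>w\<in>U. (v, w) \<in> E G" and al: "\<alpha> < 2"
    and stable: "\<not> (\<exists>s. attr_step G U T \<alpha> A (U, \<sigma>) s)"
    and won: "\<forall>t \<in> extract_tangles G U \<alpha> U \<sigma>. tw G t = \<alpha>"
    and escaping: "\<forall>t \<in> extract_tangles G U \<alpha> U \<sigma>. escapes G R t \<noteq> {}"
  shows "\<exists>t \<in> extract_tangles G U \<alpha> U \<sigma>. t \<notin> T"
proof -
  obtain t where t: "t \<in> extract_tangles G U \<alpha> U \<sigma>"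
    using extract_tangles_nonempty[OF attr UV fin ne total al stable] by blast
  have "t \<notin> T"
  proof
    assume "t \<in> T"
    have ftU: "fst t \<subseteq> U" using extract_tangles_subset[OF t] .
    have "escapes G U t = {}" using extract_tangles_no_escape[OF t] won t by blast
    moreover have "escapes G U t = escapes G R t \<inter> U"
      by (rule escapes_in_subgame) (use ftU U in auto)
    moreover have "escapes G R t \<subseteq> R" by (auto simp: escapes_def edges_in_def)
    ultimately have "escapes G R t \<subseteq> dom r" using U by auto
    then have "escapes G R t = {}"
      using trapped \<open>t \<in> T\<close> ftU U by (auto simp: trapped_tangles_closed_def)
    then show False using escaping t by blast
  qed
  then show ?thesis using t by blast
qed

text \<open>The conjunct on Y records that a completed round of search has found a new tangle; it
  drives termination.\<close>
fun alg_inv :: "('v, 'a) pgame_scheme \<Rightarrow> 'v state \<Rightarrow> bool" where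
  "alg_inv G (Solve R W S T) = (solve_inv G R W S \<and> (\<forall>t\<in>T. is_tangle G t))"
| "alg_inv G (Search R W S T r Y) = (solve_inv G R W S \<and> (\<forall>t\<in>T. is_tangle G t)
     \<and> (\<forall>t\<in>Y. is_tangle G t) \<and> R \<noteq> {} \<and> dom r \<subseteq> R
     \<and> (\<forall>v \<in> R - dom r. \<exists>w \<in> R - dom r. (v, w) \<in> E G)
     \<and> (R \<subseteq> dom r \<longrightarrow> \<not> Y \<subseteq> T) \<and> trapped_tangles_closed G R T r)"
| "alg_inv G (TAttr R W S T r Y Z \<sigma>) = (solve_inv G R W S \<and> (\<forall>t\<in>T. is_tangle G t)
     \<and> (\<forall>t\<in>Y. is_tangle G t) \<and> dom r \<subseteq> R \<and> \<not> R \<subseteq> dom r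
     \<and> (\<forall>v \<in> R - dom r. \<exists>w \<in> R - dom r. (v, w) \<in> E G)
     \<and> trapped_tangles_closed G R T r \<and> attr_inv G (R - dom r) (prio G (R - dom r) mod 2)
         ({v. pr G v = prio G (R - dom r)} \<inter> (R - dom r)) Z \<sigma>)"
| "alg_inv G (Attr R W S T d Z \<sigma>) = (solve_inv G R W S \<and> (\<forall>t\<in>T. is_tangle G t) \<and> is_tangle G d
     \<and> fst d \<subseteq> R \<and> escapes G R d = {} \<and> attr_inv G R (tw G d) (fst d) Z \<sigma>)"
| "alg_inv G (Done W S) = solve_inv G {} W S"

lemma alg_inv_init: "parity_game G \<Longrightarrow> alg_inv G (init G)"
  by (simp add: init_def solve_inv_init)

lemma alg_inv_tattr_next:
  assumes inv: "alg_inv G (TAttr R W S T r Y Z \<sigma>)" and pg: "parity_game G"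
    and U: "U = R - dom r" and p: "p = prio G U"
    and stable: "\<not> (\<exists>s. attr_step G U T (p mod 2) ({v. pr G v = p} \<inter> U) (Z, \<sigma>) s)"
    and escaping: "\<forall>t \<in> extract_tangles G U (p mod 2) Z \<sigma>. escapes G R t \<noteq> {}"
  shows "alg_inv G (Search R W S T (\<lambda>v. if v \<in> Z then Some p else r v)
             (Y \<union> extract_tangles G U (p mod 2) Z \<sigma>))"
proof -
  define \<alpha> A X where "\<alpha> = p mod 2" and "A = {v. pr G v = p} \<inter> U"
    and "X = extract_tangles G U (p mod 2) Z \<sigma>"
  have al: "\<alpha> < 2" by (simp add: \<alpha>_def)
  have si: "solve_inv G R W S" and tangles: "\<forall>t\<in>T. is_tangle G t" "\<forall>t\<in>Y. is_tangle G t"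
    and dr: "dom r \<subseteq> R" and nR: "\<not> R \<subseteq> dom r" and total: "\<forall>v \<in> U. \<exists>w \<in> U. (v, w) \<in> E G"
    and trapped: "trapped_tangles_closed G R T r" and attr: "attr_inv G U \<alpha> A Z \<sigma>"
    using inv U p by (auto simp: \<alpha>_def A_def)
  have UV: "U \<subseteq> V G" using si U by (auto simp: solve_inv_def)
  then have fin: "finite U" using pg finite_subset by (auto simp: parity_game_def)
  have ZU: "Z \<subseteq> U" using attr by (simp add: attr_inv_def)
  have dom_r: "dom (\<lambda>v. if v \<in> Z then Some p else r v) = Z \<union> dom r" by (auto split: if_splits)
  have X: "\<forall>t\<in>X. is_tangle G t \<and> tw G t = \<alpha>"
    using extract_tangles_is_tangle[OF attr UV fin A_def p] unfolding X_def \<alpha>_def by blast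
  have "\<forall>v\<in>U - Z. \<exists>w\<in>U - Z. (v, w) \<in> E G"
    using attr_stable_complement_total[OF stable[folded \<alpha>_def A_def] ZU UV al total] .
  moreover have "trapped_tangles_closed G R T (\<lambda>v. if v \<in> Z then Some p else r v)"
    using trapped_tangles_closed_remove_attr[OF trapped tangles(1) U ZU al stable[folded \<alpha>_def]] .
  moreover have "\<not> Y \<union> X \<subseteq> T" if "R \<subseteq> dom (\<lambda>v. if v \<in> Z then Some p else r v)"
  proof -
    have "Z = U" using that ZU U dom_r by auto
    then have "\<exists>t\<in>X. t \<notin> T"
      using extract_tangles_new[OF trapped U _ UV fin _ total al, of A \<sigma>] attr stable escaping X nR U
      unfolding X_def \<alpha>_def A_def by auto
    then show ?thesis by blast
  qed
  ultimately show ?thesis using si tangles X dr ZU U dom_r nR unfolding X_def by auto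
qed

lemma alg_inv_step:
  assumes "alg_step G s s'" "alg_inv G s" "parity_game G"
  shows "alg_inv G s'"
  using assms(1)
proof (cases rule: alg_step.cases)
  case (search_iter R r U' p W S T Y)
  then show ?thesis using assms(2) attr_inv_init[of "{v. pr G v = p} \<inter> U'" U'] by auto
next
  case (tattr_step U' R r p T Z \<sigma> Z' \<sigma>' W S Y)
  then show ?thesis using assms(2) attr_inv_step[OF tattr_step(5) _ _ assms(3)] by auto
next
  case (tattr_dominion U' R r p T Z \<sigma> t W S Y)
  have si: "solve_inv G R W S" and attr: "attr_inv G U' (p mod 2) ({v. pr G v = p} \<inter> U') Z \<sigma>"
    using assms(2) tattr_dominion by auto
  have UV: "U' \<subseteq> V G" using si tattr_dominion by (auto simp: solve_inv_def)
  then have "finite U'" using assms(3) finite_subset by (auto simp: parity_game_def)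
  then have "is_tangle G t"
    using extract_tangles_is_tangle[OF attr UV _ refl tattr_dominion(4) refl tattr_dominion(6)] by blast
  moreover have "fst t \<subseteq> R" using extract_tangles_subset[OF tattr_dominion(6)] attr tattr_dominion
    by (auto simp: attr_inv_def)
  ultimately show ?thesis using assms(2) tattr_dominion attr_inv_init[of "fst t" R G "tw G t"] by auto
next
  case (tattr_next U' R r p T Z \<sigma> W S Y)
  then show ?thesis using alg_inv_tattr_next[OF _ assms(3)] assms(2) by blast
next
  case (attr_step R d Z \<sigma> Z' \<sigma>' W S T)
  then show ?thesis using attr_inv_step[OF attr_step(3) _ _ assms(3) tw_less_2] assms(2) by auto
next
  case (attr_done R d Z \<sigma> \<alpha> W S T)
  then have "solve_inv G (R - Z) (W(\<alpha> := W \<alpha> \<union> Z)) (S(\<alpha> := S \<alpha> ++ \<sigma> ++ snd d))"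
    using solve_inv_attr_done[OF _ assms(3)] assms(2) by auto
  then show ?thesis using assms(2) attr_done by auto
qed (use assms(2) in \<open>auto simp: solve_inv_def trapped_tangles_closed_def\<close>)

lemma alg_inv_reachable: "(alg_step G)\<^sup>*\<^sup>* (init G) s \<Longrightarrow> parity_game G \<Longrightarrow> alg_inv G s"
  by (induction rule: rtranclp_induct) (auto simp: alg_inv_init intro: alg_inv_step)

section \<open>Termination\<close>

lemma finite_maps_dom_ran_subset:
  assumes "finite A" "finite B"
  shows "finite {m. dom m \<subseteq> A \<and> ran m \<subseteq> B}"
proof -
  have "{m. dom m \<subseteq> A \<and> ran m \<subseteq> B} = (\<Union>D \<in> Pow A. {m. dom m = D \<and> ran m \<subseteq> B})" by auto
  moreover have "finite {m. dom m = D \<and> ran m \<subseteq> B}" if "D \<in> Pow A" for D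
    using that assms finite_subset finite_set_of_finite_maps by blast
  ultimately show ?thesis using assms by simp
qed

definition tangle_universe :: "('v, 'a) pgame_scheme \<Rightarrow> 'v tangle set" where
  "tangle_universe G = {t. fst t \<subseteq> V G \<and> dom (snd t) \<subseteq> V G \<and> ran (snd t) \<subseteq> V G}"

lemma finite_tangle_universe:
  assumes "parity_game G"
  shows "finite (tangle_universe G)"
proof -
  have "finite (V G)" using assms by (simp add: parity_game_def)
  then have "finite (Pow (V G) \<times> {m. dom m \<subseteq> V G \<and> ran m \<subseteq> V G})"
    by (simp add: finite_maps_dom_ran_subset)
  moreover have "tangle_universe G \<subseteq> Pow (V G) \<times> {m. dom m \<subseteq> V G \<and> ran m \<subseteq> V G}"
    unfolding tangle_universe_def by auto
  ultimately show ?thesis by (rule finite_subset[rotated])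
qed

lemma is_tangle_in_tangle_universe: "parity_game G \<Longrightarrow> is_tangle G t \<Longrightarrow> t \<in> tangle_universe G"
  unfolding tangle_universe_def is_tangle_def ran_def using parity_game_edge_in_V by blast

fun remaining_size :: "'v state \<Rightarrow> nat" where
  "remaining_size (Solve R W S T) = card R"
| "remaining_size (Search R W S T r Y) = card R"
| "remaining_size (TAttr R W S T r Y Z \<sigma>) = card R"
| "remaining_size (Attr R W S T d Z \<sigma>) = card R"
| "remaining_size (Done W S) = 0"

fun phase :: "'v state \<Rightarrow> nat" where
  "phase (Solve R W S T) = 2"
| "phase (Search R W S T r Y) = 1"
| "phase (TAttr R W S T r Y Z \<sigma>) = 1"
| "phase (Attr R W S T d Z \<sigma>) = 0"
| "phase (Done W S) = 0"

fun unknown_tangles :: "('v, 'a) pgame_scheme \<Rightarrow> 'v state \<Rightarrow> nat" where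
  "unknown_tangles G (Search R W S T r Y) = card (tangle_universe G - T)"
| "unknown_tangles G (TAttr R W S T r Y Z \<sigma>) = card (tangle_universe G - T)"
| "unknown_tangles G _ = 0"

fun unsearched_size :: "'v state \<Rightarrow> nat" where
  "unsearched_size (Search R W S T r Y) = card (R - dom r)"
| "unsearched_size (TAttr R W S T r Y Z \<sigma>) = card (R - dom r)"
| "unsearched_size _ = 0"

fun search_pending :: "'v state \<Rightarrow> nat" where
  "search_pending (Search R W S T r Y) = 1"
| "search_pending _ = 0"

fun unattracted_size :: "'v state \<Rightarrow> nat" where
  "unattracted_size (TAttr R W S T r Y Z \<sigma>) = card (R - dom r - Z) + card (R - dom r - dom \<sigma>)"
| "unattracted_size (Attr R W S T d Z \<sigma>) = card (R - Z) + card (R - dom \<sigma>)"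
| "unattracted_size _ = 0"

text \<open>Removing a dominion shrinks the game; within one call of search every round that removes
  all vertices adds a new tangle; within a round the unsearched part shrinks; every attractor
  step grows the attractor or its strategy.\<close>
definition alg_order :: "('v, 'a) pgame_scheme \<Rightarrow> ('v state \<times> 'v state) set" where
  "alg_order G = measures [remaining_size, phase, unknown_tangles G, unsearched_size,
     search_pending, unattracted_size]"

lemma attr_progress_card:
  assumes fin: "finite U" and attr: "attr_inv G U \<alpha> A Z' \<sigma>'"
    and step: "attr_step G U T \<alpha> A (Z, \<sigma>) (Z', \<sigma>')"
  shows "card (U - Z') + card (U - dom \<sigma>') < card (U - Z) + card (U - dom \<sigma>)"
proof -
  have grow: "Z \<subseteq> Z'" "dom \<sigma> \<subseteq> dom \<sigma>'" "Z \<noteq> Z' \<or> dom \<sigma> \<noteq> dom \<sigma>'"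
    using attr_step_grows[OF step] by auto
  have sub: "Z' \<subseteq> U" "dom \<sigma>' \<subseteq> U" using attr by (auto simp: attr_inv_def)
  have "U - Z' \<subseteq> U - Z" "U - dom \<sigma>' \<subseteq> U - dom \<sigma>" using grow by auto
  then have "card (U - Z') \<le> card (U - Z)" "card (U - dom \<sigma>') \<le> card (U - dom \<sigma>)"
    using fin by (simp_all add: card_mono)
  moreover have "U - Z' \<subset> U - Z \<or> U - dom \<sigma>' \<subset> U - dom \<sigma>" using grow sub by blast
  then have "card (U - Z') < card (U - Z) \<or> card (U - dom \<sigma>') < card (U - dom \<sigma>)"
    using fin by (meson finite_Diff psubset_card_mono)
  ultimately show ?thesis by linarith
qed

lemma alg_step_decreases:
  assumes step: "alg_step G s s'" and inv: "alg_inv G s" and pg: "parity_game G"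
  shows "(s', s) \<in> alg_order G"
  using step
proof (cases rule: alg_step.cases)
  case (search_repeat R r W S T Y)
  then obtain y where y: "y \<in> Y" "y \<notin> T" "is_tangle G y" using inv by auto
  then have "tangle_universe G - (T \<union> Y) \<subset> tangle_universe G - T"
    using is_tangle_in_tangle_universe[OF pg] by blast
  then have "card (tangle_universe G - (T \<union> Y)) < card (tangle_universe G - T)"
    using finite_tangle_universe[OF pg] by (intro psubset_card_mono) auto
  then show ?thesis using search_repeat by (auto simp: alg_order_def intro!: measures_lesseq measures_less)
next
  case (tattr_step U' R r p T Z \<sigma> Z' \<sigma>' W S Y)
  have "attr_inv G U' (p mod 2) ({v. pr G v = p} \<inter> U') Z' \<sigma>'"
    using inv tattr_step attr_inv_step[OF tattr_step(5) _ _ pg] by auto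
  moreover have "R \<subseteq> V G" using inv tattr_step by (simp add: solve_inv_def)
  then have "finite U'" using pg tattr_step finite_subset by (auto simp: parity_game_def)
  ultimately show ?thesis using tattr_step attr_progress_card
    by (auto simp: alg_order_def intro!: measures_lesseq measures_less)
next
  case (tattr_next U' R r p T Z \<sigma> W S Y)
  have attr: "attr_inv G U' (p mod 2) ({v. pr G v = p} \<inter> U') Z \<sigma>" and RV: "R \<subseteq> V G"
    and nR: "\<not> R \<subseteq> dom r"
    using inv tattr_next by (auto simp: solve_inv_def)
  have finR: "finite R" using RV pg finite_subset by (auto simp: parity_game_def)
  then have "finite U'" "U' \<noteq> {}" using nR tattr_next by auto
  then have "Max (pr G ` U') \<in> pr G ` U'" by (intro Max_in) auto
  then obtain a where "a \<in> U'" "pr G a = p" using tattr_next(4) unfolding prio_def by auto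
  then have "a \<in> U'" "a \<in> Z" using attr by (auto simp: attr_inv_def)
  then have "R - (Z \<union> dom r) \<subset> R - dom r" using tattr_next by blast
  moreover have "dom (\<lambda>v. if v \<in> Z then Some p else r v) = Z \<union> dom r" by (auto split: if_splits)
  ultimately have "card (R - dom (\<lambda>v. if v \<in> Z then Some p else r v)) < card (R - dom r)"
    using finR by (simp add: psubset_card_mono)
  then show ?thesis using tattr_next by (auto simp: alg_order_def intro!: measures_lesseq measures_less)
next
  case (attr_step R d Z \<sigma> Z' \<sigma>' W S T)
  have "attr_inv G R (tw G d) (fst d) Z' \<sigma>'"
    using inv attr_step attr_inv_step[OF attr_step(3) _ _ pg tw_less_2] by auto
  moreover have "R \<subseteq> V G" using inv attr_step by (simp add: solve_inv_def)
  then have "finite R" using pg finite_subset by (auto simp: parity_game_def)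
  ultimately show ?thesis using attr_step attr_progress_card
    by (auto simp: alg_order_def intro!: measures_lesseq measures_less)
next
  case (attr_done R d Z \<sigma> \<alpha> W S T)
  have "R \<subseteq> V G" "fst d \<noteq> {}" "fst d \<subseteq> Z" "Z \<subseteq> R"
    using inv attr_done by (auto simp: solve_inv_def is_tangle_def attr_inv_def)
  moreover have "finite R" using calculation(1) pg finite_subset by (auto simp: parity_game_def)
  ultimately have "card (R - Z) < card R" by (intro psubset_card_mono) auto
  then show ?thesis using attr_done by (auto simp: alg_order_def intro!: measures_less)
qed (auto simp: alg_order_def intro!: measures_lesseq measures_less)

lemma no_infinite_alg_run:
  assumes pg: "parity_game G"
  shows "\<not> (\<exists>f. f 0 = init G \<and> (\<forall>i. alg_step G (f i) (f (Suc i))))"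
proof
  assume "\<exists>f. f 0 = init G \<and> (\<forall>i. alg_step G (f i) (f (Suc i)))"
  then obtain f where f0: "f 0 = init G" and steps: "\<forall>i. alg_step G (f i) (f (Suc i))" by blast
  have "alg_inv G (f i)" for i
    by (induction i) (use f0 alg_inv_init[OF pg] alg_inv_step steps pg in auto)
  then have "\<forall>i. (f (Suc i), f i) \<in> alg_order G" using alg_step_decreases steps pg by blast
  moreover have "wf (alg_order G)" by (simp add: alg_order_def)
  ultimately show False using wf_iff_no_infinite_down_chain by blast
qed

lemma alg_step_progress: "(\<exists>s'. alg_step G s s') \<or> (\<exists>W S. s = Done W S)"
proof (cases s)
  case (Solve R W S T)
  then show ?thesis by (cases "R = {}") (auto intro: alg_step.intros)
next
  case (Search R W S T r Y)
  then show ?thesis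
    by (cases "R \<subseteq> dom r") (auto intro: alg_step.search_repeat alg_step.search_iter[OF _ refl refl])
next
  case (TAttr R W S T r Y Z \<sigma>)
  let ?U = "R - dom r" and ?p = "prio G (R - dom r)"
  consider "\<exists>s. attr_step G ?U T (?p mod 2) ({v. pr G v = ?p} \<inter> ?U) (Z, \<sigma>) s"
    | "\<not> (\<exists>s. attr_step G ?U T (?p mod 2) ({v. pr G v = ?p} \<inter> ?U) (Z, \<sigma>) s)"
      "\<exists>t \<in> extract_tangles G ?U (?p mod 2) Z \<sigma>. escapes G R t = {}"
    | "\<not> (\<exists>s. attr_step G ?U T (?p mod 2) ({v. pr G v = ?p} \<inter> ?U) (Z, \<sigma>) s)"
      "\<forall>t \<in> extract_tangles G ?U (?p mod 2) Z \<sigma>. escapes G R t \<noteq> {}"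
    by blast
  then show ?thesis
  proof cases
    case 1 then show ?thesis using TAttr by (auto intro: alg_step.tattr_step[OF refl refl])
  next
    case 2 then show ?thesis using TAttr by (blast intro: alg_step.tattr_dominion[OF refl refl])
  next
    case 3 then show ?thesis using TAttr by (blast intro: alg_step.tattr_next[OF refl refl])
  qed
next
  case (Attr R W S T d Z \<sigma>)
  show ?thesis
  proof (cases "\<exists>s. attr_step G R {} (tw G d) (fst d) (Z, \<sigma>) s")
    case True then show ?thesis using Attr by (auto intro: alg_step.attr_step)
  next
    case False then show ?thesis using Attr by (blast intro: alg_step.attr_done[OF _ refl])
  qed
qed simp

theorem lemma10:
  assumes "parity_game G"
  shows "\<not> (\<exists>f. f 0 = init G \<and> (\<forall>i. alg_step G (f i) (f (Suc i))))
    \<and> (\<forall>s. (alg_step G)\<^sup>*\<^sup>* (init G) s \<and> \<not> (\<exists>s'. alg_step G s s') \<longrightarrow> (\<exists>W S. s = Done W S))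
    \<and> (\<forall>W S. (alg_step G)\<^sup>*\<^sup>* (init G) (Done W S) \<longrightarrow> solves G W S)"
proof (intro conjI allI impI)
  show "\<not> (\<exists>f. f 0 = init G \<and> (\<forall>i. alg_step G (f i) (f (Suc i))))"
    using no_infinite_alg_run[OF assms] .
next
  fix s assume "(alg_step G)\<^sup>*\<^sup>* (init G) s \<and> \<not> (\<exists>s'. alg_step G s s')"
  then show "\<exists>W S. s = Done W S" using alg_step_progress by blast
next
  fix W S assume "(alg_step G)\<^sup>*\<^sup>* (init G) (Done W S)"
  then have "alg_inv G (Done W S)" using alg_inv_reachable assms by blast
  then show "solves G W S" using solve_inv_solves assms by simp
qed

end
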